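(* Consider a sequence of matched studies indexed by $I\to\infty$ with set sizes $n_i\ge2$ and assume Fisher's null $H_0$ holds. Let $1\le k\le I$ and $\Gamma_0\in[1,\infty)$ (possibly depending on $I$) with $\Gamma^\star_{(k)}\le\Gamma_0$, and suppose Conditions A1, A3 and A4 hold. Then for every $c\ge0$, $$\limsup_{I\to\infty}\mathbb P\{T\ge\mu(\Gamma_0;k)+c\,\sigma(\Gamma_0;k)\}\le1-\Phi(c).$$
   Context: Setting: $I$ matched sets, set $i$ has $n_i\ge2$ units; potential outcomes fixed; $Z$ (one treated unit per set) random with true mechanism $\mathbb P(Z=z)=\prod_i\prod_j(p^\star_{ij})^{z_{ij}}$, $\sum_jp^\star_{ij}=1$; $\Gamma^\star_i=\max_jp^\star_{ij}/\min_kp^\star_{ik}\in[1,\infty]$, $\Gamma^\star_{(k)}$ its $k$th smallest value; $\mathcal I^\star_k$ = indices of $k$ sets with the smallest $\Gamma^\star_i$. $H_0$: $Y_{ij}(1)=Y_{ij}(0)$ for all $i,j$. $T=\sum_iT_i$, $T_i=\sum_jZ_{ij}q_{ij}$, $q_{ij}$ fixed functions of $Y(0)$; true $\mu_i=\mathbb ET_i$, $v_i^2=\mathrm{Var}T_i$. Sort $q_{i(1)}\le\dots\le q_{i(n_i)}$, $R_i=q_{i(n_i)}-q_{i(1)}$. For $\Gamma_i<\infty$, $1\le a\le n_i-1$: $\mu_{ia}(\Gamma_i)=\frac{\sum_{j\le a}q_{i(j)}+\Gamma_i\sum_{j>a}q_{i(j)}}{a+\Gamma_i(n_i-a)}$,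 $v_{ia}^2(\Gamma_i)=\frac{\sum_{j\le a}q_{i(j)}^2+\Gamma_i\sum_{j>a}q_{i(j)}^2}{a+\Gamma_i(n_i-a)}-\mu_{ia}(\Gamma_i)^2$; $\mu_i(\Gamma_i)=\max_a\mu_{ia}(\Gamma_i)$, $v_i^2(\Gamma_i)=\max\{v_{ia}^2(\Gamma_i):\mu_{ia}(\Gamma_i)=\mu_i(\Gamma_i)\}$; $\mu_i(\infty)=q_{i(n_i)}$, $v_i^2(\infty)=0$. Rank the sets by increasing $\mu_i(\infty)-\mu_i(\Gamma_0)$, breaking ties so that sets with larger $v_i^2(\Gamma_0)$ come first; $\mathcal I_{\Gamma_0;k}$ is the first $k$ sets. $\mu(\Gamma_0;k)=\sum_{i\in\mathcal I_{\Gamma_0;k}}\mu_i(\Gamma_0)+\sum_{i\notin\mathcal I_{\Gamma_0;k}}q_{i(n_i)}$, $\sigma^2(\Gamma_0;k)=\sum_{i\in\mathcal I_{\Gamma_0;k}}v_i^2(\Gamma_0)$. For $\Gamma\in[1,\infty]^I$: $\mathcal A_\Gamma=\{i:v_i^2>v_i^2(\Gamma_i)\}$, $\Delta_\mu(\Gamma)=|\mathcal A_\Gamma|^{-1}\sum_{i\in\mathcal A_\Gamma}\{\mu_i(\Gamma_i)-\mu_i\}$, $\Delta_{v^2}(\Gamma)=|\mathcal A_\Gamma|^{-1}\sum_{i\in\mathcal A_\Gamma}\{v_i^2-v_i^2(\Gamma_i)\}$ (ratio $\infty$ if empty). Condition A1: $(\max_iR_i^2)/\sum_iR_i^2/(n_i\Gamma^\star_i)^3\to0$.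 Condition A3: with $\Gamma=\Gamma_0\mathbf 1_{\mathcal I^\star_k}+\infty\cdot\mathbf 1_{(\mathcal I^\star_k)^c}$ (entries $\Gamma_0$ on $\mathcal I^\star_k$, $\infty$ elsewhere), $\frac{\Delta_\mu(\Gamma)}{\Delta_{v^2}(\Gamma)}\sqrt{\sum_iR_i^2/(n_i\Gamma^\star_i)^3}\to\infty$. Condition A4: with $\mathcal B_k(\Gamma_0)=\{(i,j):v_i^2(\Gamma_0)<v_j^2(\Gamma_0),\ i\in\mathcal I_{\Gamma_0;k}\setminus\mathcal I^\star_k,\ j\in\mathcal I^\star_k\setminus\mathcal I_{\Gamma_0;k}\}$, $\Delta_\mu(\Gamma_0;k)=|\mathcal B_k|^{-1}\sum_{(i,j)\in\mathcal B_k}[\{\mu_j(\infty)-\mu_j(\Gamma_0)\}-\{\mu_i(\infty)-\mu_i(\Gamma_0)\}]$, $\Delta_{v^2}(\Gamma_0;k)=|\mathcal B_k|^{-1}\sum_{(i,j)\in\mathcal B_k}\{v_j^2(\Gamma_0)-v_i^2(\Gamma_0)\}$ (ratio $\infty$ if $\mathcal B_k$ empty), $\frac{\Delta_\mu(\Gamma_0;k)}{\Delta_{v^2}(\Gamma_0;k)}\sqrt{\sum_{i\in\mathcal I^\star_k}R_i^2/(n_i\Gamma_0)^3}\to\infty$. All quantities may depend on $I$; $\Phi$ is the standard normal CDF. *)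

theory Defs
  imports "HOL-Probability.Probability"
begin

definition Phi :: "real \<Rightarrow> real" where
  "Phi = cdf std_normal_distribution"

text \<open>All per-set quantities take the statistic values q :: nat => real of the
  units 0..<n of one matched set (and the true treatment probabilities p).\<close>

text \<open>Sorted statistics: qsrt q n ! (j-1) is q_{i(j)} (0-based list).\<close>
definition qsrt :: "(nat \<Rightarrow> real) \<Rightarrow> nat \<Rightarrow> real list" where
  "qsrt q n = sort (map q [0..<n])"

definition Rng :: "(nat \<Rightarrow> real) \<Rightarrow> nat \<Rightarrow> real" where
  "Rng q n = qsrt q n ! (n - 1) - qsrt q n ! 0"

definition mu_a :: "(nat \<Rightarrow> real) \<Rightarrow> nat \<Rightarrow> real \<Rightarrow> nat \<Rightarrow> real" where
  "mu_a q n G a =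
     ((\<Sum>j<a. qsrt q n ! j) + G * (\<Sum>j\<in>{a..<n}. qsrt q n ! j)) / (real a + G * real (n - a))"

definition v2_a :: "(nat \<Rightarrow> real) \<Rightarrow> nat \<Rightarrow> real \<Rightarrow> nat \<Rightarrow> real" where
  "v2_a q n G a =
     ((\<Sum>j<a. (qsrt q n ! j)^2) + G * (\<Sum>j\<in>{a..<n}. (qsrt q n ! j)^2)) / (real a + G * real (n - a))
     - (mu_a q n G a)^2"

definition mu_fin :: "(nat \<Rightarrow> real) \<Rightarrow> nat \<Rightarrow> real \<Rightarrow> real" where
  "mu_fin q n G = Max (mu_a q n G ` {1..n-1})"

definition v2_fin :: "(nat \<Rightarrow> real) \<Rightarrow> nat \<Rightarrow> real \<Rightarrow> real" where
  "v2_fin q n G = Max (v2_a q n G ` {a \<in> {1..n-1}. mu_a q n G a = mu_fin q n G})"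

definition muG :: "(nat \<Rightarrow> real) \<Rightarrow> nat \<Rightarrow> ereal \<Rightarrow> real" where
  "muG q n G = (if G = \<infinity> then qsrt q n ! (n - 1) else mu_fin q n (real_of_ereal G))"

definition v2G :: "(nat \<Rightarrow> real) \<Rightarrow> nat \<Rightarrow> ereal \<Rightarrow> real" where
  "v2G q n G = (if G = \<infinity> then 0 else v2_fin q n (real_of_ereal G))"

definition mu_true :: "(nat \<Rightarrow> real) \<Rightarrow> (nat \<Rightarrow> real) \<Rightarrow> nat \<Rightarrow> real" where
  "mu_true p q n = (\<Sum>j<n. p j * q j)"

definition v2_true :: "(nat \<Rightarrow> real) \<Rightarrow> (nat \<Rightarrow> real) \<Rightarrow> nat \<Rightarrow> real" where
  "v2_true p q n = (\<Sum>j<n. p j * (q j)^2) - (mu_true p q n)^2"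

definition GammaStar :: "(nat \<Rightarrow> real) \<Rightarrow> nat \<Rightarrow> ereal" where
  "GammaStar p n = (if Min (p ` {..<n}) = 0 then \<infinity>
                    else ereal (Max (p ` {..<n}) / Min (p ` {..<n})))"

definition kth_smallest :: "'a::linorder list \<Rightarrow> nat \<Rightarrow> 'a" where
  "kth_smallest xs k = sort xs ! (k - 1)"

definition wterm :: "real \<Rightarrow> nat \<Rightarrow> ereal \<Rightarrow> real" where
  "wterm R n G = (if G = \<infinity> then 0 else R^2 / (real n * real_of_ereal G)^3)"

text \<open>From here on, for a fixed study: I sets, n :: nat => nat set sizes,
  q :: nat => nat => real statistics q_ij, p :: nat => nat => real true probabilities.\<close>

definition Ssum :: "nat \<Rightarrow> (nat \<Rightarrow> nat) \<Rightarrow> (nat \<Rightarrow> nat \<Rightarrow> real) \<Rightarrow> (nat \<Rightarrow> nat \<Rightarrow> real) \<Rightarrow> real" where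
  "Ssum I n q p = (\<Sum>i<I. wterm (Rng (q i) (n i)) (n i) (GammaStar (p i) (n i)))"

text \<open>Exact probability P{T >= t} under the true mechanism (Fisher's null: T = sum of q of treated units).\<close>
definition prob_T_ge :: "nat \<Rightarrow> (nat \<Rightarrow> nat) \<Rightarrow> (nat \<Rightarrow> nat \<Rightarrow> real) \<Rightarrow> (nat \<Rightarrow> nat \<Rightarrow> real) \<Rightarrow> real \<Rightarrow> real" where
  "prob_T_ge I n q p t =
     (\<Sum>z\<in>PiE {..<I} (\<lambda>i. {..<n i}).
        (\<Prod>i<I. p i (z i)) * (if (\<Sum>i<I. q i (z i)) \<ge> t then 1 else 0))"

text \<open>J is a valid set I*_k: k sets with the smallest Gamma*_i (ties arbitrary).\<close>
definition is_Istar :: "nat \<Rightarrow> (nat \<Rightarrow> nat) \<Rightarrow> (nat \<Rightarrow> nat \<Rightarrow> real) \<Rightarrow> nat \<Rightarrow> nat set \<Rightarrow> bool" where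
  "is_Istar I n p k J \<longleftrightarrow> J \<subseteq> {..<I} \<and> card J = k \<and>
     (\<forall>i\<in>J. \<forall>j\<in>{..<I} - J. GammaStar (p i) (n i) \<le> GammaStar (p j) (n j))"

text \<open>J is a valid set I_{Gamma0;k}: the first k sets in the ranking by increasing
  mu_i(inf) - mu_i(Gamma0), ties broken by larger v_i^2(Gamma0) first (remaining ties arbitrary).\<close>
definition is_Irank :: "nat \<Rightarrow> (nat \<Rightarrow> nat) \<Rightarrow> (nat \<Rightarrow> nat \<Rightarrow> real) \<Rightarrow> real \<Rightarrow> nat \<Rightarrow> nat set \<Rightarrow> bool" where
  "is_Irank I n q G0 k J \<longleftrightarrow> J \<subseteq> {..<I} \<and> card J = k \<and>
     (\<forall>i\<in>J. \<forall>j\<in>{..<I} - J.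
        let di = muG (q i) (n i) \<infinity> - muG (q i) (n i) (ereal G0);
            dj = muG (q j) (n j) \<infinity> - muG (q j) (n j) (ereal G0)
        in di < dj \<or> (di = dj \<and> v2G (q i) (n i) (ereal G0) \<ge> v2G (q j) (n j) (ereal G0)))"

definition mu_Gk :: "nat \<Rightarrow> (nat \<Rightarrow> nat) \<Rightarrow> (nat \<Rightarrow> nat \<Rightarrow> real) \<Rightarrow> real \<Rightarrow> nat set \<Rightarrow> real" where
  "mu_Gk I n q G0 J = (\<Sum>i\<in>J. muG (q i) (n i) (ereal G0)) + (\<Sum>i\<in>{..<I} - J. qsrt (q i) (n i) ! (n i - 1))"

definition sigma2_Gk :: "(nat \<Rightarrow> nat) \<Rightarrow> (nat \<Rightarrow> nat \<Rightarrow> real) \<Rightarrow> real \<Rightarrow> nat set \<Rightarrow> real" where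
  "sigma2_Gk n q G0 J = (\<Sum>i\<in>J. v2G (q i) (n i) (ereal G0))"

definition A1_ratio :: "nat \<Rightarrow> (nat \<Rightarrow> nat) \<Rightarrow> (nat \<Rightarrow> nat \<Rightarrow> real) \<Rightarrow> (nat \<Rightarrow> nat \<Rightarrow> real) \<Rightarrow> real" where
  "A1_ratio I n q p = Max ((\<lambda>i. (Rng (q i) (n i))^2) ` {..<I}) / Ssum I n q p"

definition A_set :: "nat \<Rightarrow> (nat \<Rightarrow> nat) \<Rightarrow> (nat \<Rightarrow> nat \<Rightarrow> real) \<Rightarrow> (nat \<Rightarrow> nat \<Rightarrow> real) \<Rightarrow> (nat \<Rightarrow> ereal) \<Rightarrow> nat set" where
  "A_set I n q p G = {i \<in> {..<I}. v2_true (p i) (q i) (n i) > v2G (q i) (n i) (G i)}"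

definition Delta_mu :: "nat \<Rightarrow> (nat \<Rightarrow> nat) \<Rightarrow> (nat \<Rightarrow> nat \<Rightarrow> real) \<Rightarrow> (nat \<Rightarrow> nat \<Rightarrow> real) \<Rightarrow> (nat \<Rightarrow> ereal) \<Rightarrow> real" where
  "Delta_mu I n q p G = (let A = A_set I n q p G in
     (\<Sum>i\<in>A. muG (q i) (n i) (G i) - mu_true (p i) (q i) (n i)) / real (card A))"

definition Delta_v2 :: "nat \<Rightarrow> (nat \<Rightarrow> nat) \<Rightarrow> (nat \<Rightarrow> nat \<Rightarrow> real) \<Rightarrow> (nat \<Rightarrow> nat \<Rightarrow> real) \<Rightarrow> (nat \<Rightarrow> ereal) \<Rightarrow> real" where
  "Delta_v2 I n q p G = (let A = A_set I n q p G in
     (\<Sum>i\<in>A. v2_true (p i) (q i) (n i) - v2G (q i) (n i) (G i)) / real (card A))"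

definition A3_quantity :: "nat \<Rightarrow> (nat \<Rightarrow> nat) \<Rightarrow> (nat \<Rightarrow> nat \<Rightarrow> real) \<Rightarrow> (nat \<Rightarrow> nat \<Rightarrow> real) \<Rightarrow> real \<Rightarrow> nat set \<Rightarrow> ereal" where
  "A3_quantity I n q p G0 Istar =
     (let G = (\<lambda>i. if i \<in> Istar then ereal G0 else \<infinity>) in
      if A_set I n q p G = {} then \<infinity>
      else ereal (Delta_mu I n q p G / Delta_v2 I n q p G * sqrt (Ssum I n q p)))"

definition B_set :: "(nat \<Rightarrow> nat) \<Rightarrow> (nat \<Rightarrow> nat \<Rightarrow> real) \<Rightarrow> real \<Rightarrow> nat set \<Rightarrow> nat set \<Rightarrow> (nat \<times> nat) set" where
  "B_set n q G0 Irank Istar = {(i, j). i \<in> Irank - Istar \<and> j \<in> Istar - Irank \<and>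
      v2G (q i) (n i) (ereal G0) < v2G (q j) (n j) (ereal G0)}"

definition A4_quantity :: "(nat \<Rightarrow> nat) \<Rightarrow> (nat \<Rightarrow> nat \<Rightarrow> real) \<Rightarrow> real \<Rightarrow> nat set \<Rightarrow> nat set \<Rightarrow> ereal" where
  "A4_quantity n q G0 Irank Istar =
     (let B = B_set n q G0 Irank Istar;
          d = (\<lambda>i. muG (q i) (n i) \<infinity> - muG (q i) (n i) (ereal G0));
          v = (\<lambda>i. v2G (q i) (n i) (ereal G0));
          Dmu = (\<Sum>(i, j)\<in>B. d j - d i) / real (card B);
          Dv = (\<Sum>(i, j)\<in>B. v j - v i) / real (card B)
      in if B = {} then \<infinity>
         else ereal (Dmu / Dv * sqrt (\<Sum>i\<in>Istar. (Rng (q i) (n i))^2 / (real (n i) * G0)^3)))"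

end

theory Submission
  imports Defs
begin

text \<open>Under \<open>H\<^sub>0\<close> the statistic \<open>T\<close> is a sum of independent bounded per-set statistics, so
  the argument has a deterministic and a probabilistic half. Deterministically, on a set with
  \<open>\<Gamma>\<^sup>\<star>\<^sub>i \<le> \<Gamma>\<^sub>0\<close> the true mean of \<open>T\<^sub>i\<close> is at most the sensitivity-model worst case
  \<open>\<mu>\<^sub>i(\<Gamma>\<^sub>0)\<close>, and on every set at most \<open>q\<^sub>i\<^sub>(\<^sub>n\<^sub>i\<^sub>)\<close>. Where the true variance exceeds the
  worst-case one, Condition A3 says that the gain in the mean pays for the loss in
  \<open>c\<close> times the standard deviation; Condition A4 says the same when \<open>I\<^sup>\<star>\<^sub>k\<close> is exchanged for
  the ranked set \<open>I\<^sub>\<Gamma>\<^sub>0\<^sub>;\<^sub>k\<close>. Hence eventually \<open>\<bbbE>T + c sd(T) \<le> \<mu>(\<Gamma>\<^sub>0;k) + c \<sigma>(\<Gamma>\<^sub>0;k)\<close>.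
  Probabilistically, Condition A1 is a Lyapunov-type condition on the ranges \<open>R\<^sub>i\<close>: a second
  order expansion of the characteristic functions of the \<open>T\<^sub>i\<close> shows that the standardized
  statistic converges to the standard normal law, which gives the tail bound.\<close>

lemma sum_lessThan_if_split:
  fixes f g :: "nat \<Rightarrow> 'a::comm_monoid_add"
  assumes "a \<le> n"
  shows "(\<Sum>k<n. if k < a then f k else g k) = (\<Sum>k<a. f k) + (\<Sum>k\<in>{a..<n}. g k)"
proof -
  have "{..<n} = {..<a} \<union> {a..<n}" using assms by auto
  then have "(\<Sum>k<n. if k < a then f k else g k)
      = (\<Sum>k<a. if k < a then f k else g k) + (\<Sum>k\<in>{a..<n}. if k < a then f k else g k)"
    by (simp add: sum.union_disjoint ivl_disj_int)
  then show ?thesis by simp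
qed

lemma qsrt_length [simp]: "length (qsrt q n) = n"
  by (simp add: qsrt_def)

lemma set_qsrt: "set (qsrt q n) = q ` {..<n}"
  by (auto simp: qsrt_def)

lemma qsrt_mono: "i \<le> j \<Longrightarrow> j < n \<Longrightarrow> qsrt q n ! i \<le> qsrt q n ! j"
  by (simp add: qsrt_def sorted_nth_mono)

lemma qsrt_nth_attained: "k < n \<Longrightarrow> \<exists>j<n. qsrt q n ! k = q j"
  using nth_mem[of k "qsrt q n"] set_qsrt[of q n] by auto

lemma qsrt_first_le: "j < n \<Longrightarrow> qsrt q n ! 0 \<le> q j"
  and le_qsrt_last: "j < n \<Longrightarrow> q j \<le> qsrt q n ! (n - 1)"
proof -
  assume "j < n"
  then have "q j \<in> set (qsrt q n)" by (simp add: set_qsrt)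
  then obtain k where k: "k < n" "qsrt q n ! k = q j" by (auto simp: in_set_conv_nth)
  show "qsrt q n ! 0 \<le> q j" using k qsrt_mono[of 0 k n q] by simp
  show "q j \<le> qsrt q n ! (n - 1)" using k qsrt_mono[of k "n - 1" n q] by simp
qed

lemma Rng_nonneg: "1 \<le> n \<Longrightarrow> 0 \<le> Rng q n"
  using qsrt_mono[of 0 "n - 1" n q] by (simp add: Rng_def)

lemma sum_qsrt: "(\<Sum>k<n. f (qsrt q n ! k)) = (\<Sum>j<n. f (q j))"
proof -
  have "mset (map f (qsrt q n)) = mset (map f (map q [0..<n]))"
    by (simp add: qsrt_def multiset.map_comp)
  then have "sum_list (map f (qsrt q n)) = sum_list (map f (map q [0..<n]))"
    by (metis sum_mset_sum_list)
  then show ?thesis by (simp add: sum_list_sum_nth atLeast0LessThan)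
qed

lemma weighted_mean_le:
  fixes w x :: "nat \<Rightarrow> real"
  assumes "\<And>j. j < n \<Longrightarrow> 0 \<le> w j" "(\<Sum>j<n. w j) = 1" "\<And>j. j < n \<Longrightarrow> x j \<le> b"
  shows "(\<Sum>j<n. w j * x j) \<le> b"
proof -
  have "(\<Sum>j<n. w j * x j) \<le> (\<Sum>j<n. w j * b)"
    using assms by (intro sum_mono mult_left_mono) auto
  also have "\<dots> = b" using assms(2) by (simp flip: sum_distrib_right)
  finally show ?thesis .
qed

lemma weighted_mean_ge:
  fixes w x :: "nat \<Rightarrow> real"
  assumes "\<And>j. j < n \<Longrightarrow> 0 \<le> w j" "(\<Sum>j<n. w j) = 1" "\<And>j. j < n \<Longrightarrow> b \<le> x j"
  shows "b \<le> (\<Sum>j<n. w j * x j)"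
  using weighted_mean_le[of n w "\<lambda>j. - x j" "- b"] assms by (simp add: sum_negf)

lemma weighted_centered_sum_eq_0:
  fixes w x :: "nat \<Rightarrow> real"
  assumes "(\<Sum>j<n. w j) = 1"
  shows "(\<Sum>j<n. w j * (x j - (\<Sum>j<n. w j * x j))) = 0"
  using assms by (simp add: right_diff_distrib sum_subtractf flip: sum_distrib_right)

lemma weighted_variance_eq:
  fixes w x :: "nat \<Rightarrow> real"
  assumes "(\<Sum>j<n. w j) = 1"
  shows "(\<Sum>j<n. w j * (x j)^2) - (\<Sum>j<n. w j * x j)^2
       = (\<Sum>j<n. w j * (x j - (\<Sum>j<n. w j * x j))^2)"
proof -
  define m where "m = (\<Sum>j<n. w j * x j)"
  have "(\<Sum>j<n. w j * (x j - m)^2) = (\<Sum>j<n. w j * (x j)^2 - 2 * m * (w j * x j) + m^2 * w j)"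
    by (rule sum.cong) (auto simp: power2_diff algebra_simps)
  also have "\<dots> = (\<Sum>j<n. w j * (x j)^2) - m^2"
    using assms by (simp add: sum.distrib sum_subtractf m_def power2_eq_square flip: sum_distrib_left)
  finally show ?thesis by (simp add: m_def)
qed

lemma weighted_sq_dev_ge:
  fixes w x :: "nat \<Rightarrow> real"
  assumes "\<And>j. j < n \<Longrightarrow> 0 \<le> w j" "a < n" "b < n" "a \<noteq> b" "m \<le> w a" "m \<le> w b" "0 \<le> m"
  shows "m * (x a - x b)^2 / 2 \<le> (\<Sum>j<n. w j * (x j - c)^2)"
proof -
  have "(x a - x b)^2 / 2 \<le> (x a - c)^2 + (x b - c)^2"
    using zero_le_power2[of "x a + x b - 2 * c"] by (simp add: power2_eq_square field_simps)
  then have "m * (x a - x b)^2 / 2 \<le> m * (x a - c)^2 + m * (x b - c)^2"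
    using mult_left_mono[OF _ assms(7)] by (fastforce simp: distrib_left)
  also have "\<dots> \<le> w a * (x a - c)^2 + w b * (x b - c)^2"
    using assms by (intro add_mono mult_right_mono) auto
  also have "\<dots> = (\<Sum>j\<in>{a, b}. w j * (x j - c)^2)" using assms by simp
  also have "\<dots> \<le> (\<Sum>j<n. w j * (x j - c)^2)"
    using assms by (intro sum_mono2) auto
  finally show ?thesis .
qed

subsection \<open>The sensitivity model\<close>

text \<open>\<open>mu_a q n G a\<close> and \<open>v2_a q n G a\<close> are the mean and variance of the sorted statistic
  when the \<open>a\<close> smallest units have odds \<open>1\<close> and the others odds \<open>G\<close>.\<close>
definition extreme_weight :: "nat \<Rightarrow> real \<Rightarrow> nat \<Rightarrow> nat \<Rightarrow> real" where
  "extreme_weight n G a k = (if k < a then 1 else G) / (real a + G * real (n - a))"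

lemma extreme_denom_pos: "1 \<le> a \<Longrightarrow> 1 \<le> G \<Longrightarrow> 0 < real a + G * real (n - a)"
  by (simp add: add_pos_nonneg)

lemma extreme_denom_le: "a \<le> n \<Longrightarrow> 1 \<le> G \<Longrightarrow> real a + G * real (n - a) \<le> real n * G"
proof -
  assume "a \<le> n" "1 \<le> G"
  then have "real a + G * real (n - a) \<le> G * real a + G * real (n - a)"
    using mult_right_mono[of 1 G "real a"] by simp
  also have "\<dots> = real n * G" using \<open>a \<le> n\<close> by (simp add: algebra_simps of_nat_diff)
  finally show ?thesis .
qed

lemma extreme_weight_sum:
  assumes "1 \<le> a" "a \<le> n" "1 \<le> G"
  shows "(\<Sum>k<n. extreme_weight n G a k) = 1"
  using assms extreme_denom_pos[of a G n]
  by (simp add: extreme_weight_def sum_lessThan_if_split flip: sum_divide_distrib)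

lemma extreme_weight_ge:
  assumes "1 \<le> a" "a \<le> n" "1 \<le> G"
  shows "1 / (real n * G) \<le> extreme_weight n G a k"
proof -
  define D where "D = real a + G * real (n - a)"
  have D: "0 < D" "D \<le> real n * G"
    unfolding D_def using assms by (simp_all only: extreme_denom_pos extreme_denom_le)
  have "1 / (real n * G) \<le> 1 / D" using D by (simp add: frac_le)
  also have "\<dots> \<le> extreme_weight n G a k"
    using D assms by (simp add: extreme_weight_def D_def divide_right_mono)
  finally show ?thesis .
qed

lemma extreme_weight_nonneg: "1 \<le> a \<Longrightarrow> 1 \<le> G \<Longrightarrow> 0 \<le> extreme_weight n G a k"
  unfolding extreme_weight_def by (intro divide_nonneg_pos) (auto intro: extreme_denom_pos)

lemma mu_a_eq_weighted_mean:
  assumes "1 \<le> a" "a \<le> n" "1 \<le> G"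
  shows "mu_a q n G a = (\<Sum>k<n. extreme_weight n G a k * qsrt q n ! k)"
proof -
  have "(\<Sum>k<n. extreme_weight n G a k * qsrt q n ! k)
      = (\<Sum>k<n. if k < a then qsrt q n ! k else G * qsrt q n ! k) / (real a + G * real (n - a))"
    by (simp add: extreme_weight_def sum_divide_distrib) (rule sum.cong, auto)
  then show ?thesis
    using assms by (simp add: mu_a_def sum_lessThan_if_split sum_distrib_left)
qed

lemma v2_a_eq_weighted_variance:
  assumes "1 \<le> a" "a \<le> n" "1 \<le> G"
  shows "v2_a q n G a = (\<Sum>k<n. extreme_weight n G a k * (qsrt q n ! k - mu_a q n G a)^2)"
proof -
  have "(\<Sum>k<n. extreme_weight n G a k * (qsrt q n ! k)^2)
      = (\<Sum>k<n. if k < a then (qsrt q n ! k)^2 else G * (qsrt q n ! k)^2) / (real a + G * real (n - a))"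
    by (simp add: extreme_weight_def sum_divide_distrib) (rule sum.cong, auto)
  then have "v2_a q n G a = (\<Sum>k<n. extreme_weight n G a k * (qsrt q n ! k)^2) - (mu_a q n G a)^2"
    using assms by (simp add: v2_a_def sum_lessThan_if_split sum_distrib_left)
  then show ?thesis
    using weighted_variance_eq[OF extreme_weight_sum[OF assms]] mu_a_eq_weighted_mean[OF assms]
    by simp
qed

lemma v2_a_ge:
  assumes "1 \<le> a" "a \<le> n" "1 \<le> G" "2 \<le> n"
  shows "(1 / (real n * G)) * (Rng q n)^2 / 2 \<le> v2_a q n G a"
  unfolding v2_a_eq_weighted_variance[OF assms(1-3)] Rng_def
  using assms extreme_weight_ge[OF assms(1-3)] extreme_weight_nonneg[OF assms(1,3)]
  by (intro weighted_sq_dev_ge) auto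

lemma mu_a_le_mu_fin: "a \<in> {1..n-1} \<Longrightarrow> mu_a q n G a \<le> mu_fin q n G"
  unfolding mu_fin_def by (intro Max_ge) auto

lemma v2_fin_ge:
  assumes "1 \<le> G" "2 \<le> n"
  shows "(1 / (real n * G)) * (Rng q n)^2 / 2 \<le> v2_fin q n G"
proof -
  have "mu_fin q n G \<in> mu_a q n G ` {1..n-1}"
    unfolding mu_fin_def using assms by (intro Max_in) auto
  then obtain a where a: "a \<in> {1..n-1}" "mu_a q n G a = mu_fin q n G" by auto
  then have "v2_a q n G a \<le> v2_fin q n G"
    unfolding v2_fin_def by (intro Max_ge) auto
  moreover have "(1 / (real n * G)) * (Rng q n)^2 / 2 \<le> v2_a q n G a"
    using a assms by (intro v2_a_ge) auto
  ultimately show ?thesis by linarith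
qed

lemma v2_fin_nonneg:
  assumes "1 \<le> G" "2 \<le> n"
  shows "0 \<le> v2_fin q n G"
proof -
  have "0 \<le> (1 / (real n * G)) * (Rng q n)^2 / 2" using assms by simp
  then show ?thesis using v2_fin_ge[OF assms, of q] by linarith
qed

lemma sq_div_cube_le:
  fixes x R :: real
  assumes "2 \<le> x"
  shows "R^2 / x^3 \<le> (1 / x) * R^2 / 2"
proof -
  have "2 * x \<le> x^3"
    using assms mult_mono[of 2 x 2 x] mult_left_mono[of 2 "x * x" x]
    by (simp add: power3_eq_cube)
  then have "R^2 / x^3 \<le> R^2 / (2 * x)"
    using assms by (intro divide_left_mono) auto
  then show ?thesis by simp
qed

lemma v2_fin_ge_wterm:
  assumes "1 \<le> G" "2 \<le> n"
  shows "(Rng q n)^2 / (real n * G)^3 \<le> v2_fin q n G"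
proof -
  have "2 \<le> real n * G" using assms mult_mono[of 2 "real n" 1 G] by simp
  then show ?thesis using sq_div_cube_le v2_fin_ge[OF assms] order_trans by blast
qed

definition tilt :: "real \<Rightarrow> real \<Rightarrow> real" where
  "tilt G y = (if 0 \<le> y then G * y else y)"

text \<open>Termwise \<open>p j * x j \<le> m * tilt G (x j)\<close>.\<close>
lemma sum_tilt_nonneg:
  fixes p x :: "nat \<Rightarrow> real"
  assumes "0 < m" "\<And>j. j < n \<Longrightarrow> m \<le> p j \<and> p j \<le> G * m" "(\<Sum>j<n. p j * x j) = 0"
  shows "0 \<le> (\<Sum>j<n. tilt G (x j))"
proof -
  have "p j * x j \<le> m * tilt G (x j)" if "j < n" for j
  proof (cases "0 \<le> x j")
    case True
    then show ?thesis
      using mult_right_mono[of "p j" "G * m" "x j"] assms(2)[OF that] by (simp add: tilt_def mult_ac)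
  next
    case False
    then show ?thesis
      using mult_right_mono_neg[of m "p j" "x j"] assms(2)[OF that] by (simp add: tilt_def)
  qed
  then have "0 \<le> m * (\<Sum>j<n. tilt G (x j))"
    using sum_mono[of "{..<n}" "\<lambda>j. p j * x j"] assms(3) by (simp add: sum_distrib_left)
  then show ?thesis using assms(1) by (simp add: zero_le_mult_iff)
qed

text \<open>For sorted values the tilted sum is the numerator of \<open>mu_a\<close> at the position where the
  values cross \<open>c\<close>.\<close>
lemma tilt_sum_cutoff:
  assumes "2 \<le> n" "1 \<le> G" "0 \<le> (\<Sum>k<n. tilt G (qsrt q n ! k - c))"
  obtains a where "a \<in> {1..n-1}"
    "0 \<le> (\<Sum>k<a. qsrt q n ! k - c) + G * (\<Sum>k\<in>{a..<n}. qsrt q n ! k - c)"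
proof -
  let ?y = "\<lambda>k. qsrt q n ! k"
  have ex: "\<exists>k<n. c \<le> ?y k"
  proof (rule ccontr)
    assume "\<not> ?thesis"
    then have "(\<Sum>k<n. tilt G (?y k - c)) < (\<Sum>k<n. 0)"
      using assms(1) by (intro sum_strict_mono) (auto simp: tilt_def lessThan_empty_iff)
    then show False using assms(3) by simp
  qed
  define a0 where "a0 = (LEAST k. k < n \<and> c \<le> ?y k)"
  have a0: "a0 < n" "c \<le> ?y a0" using LeastI_ex[OF ex] unfolding a0_def by auto
  have below: "?y k < c" if "k < a0" for k
    using not_less_Least[OF that[unfolded a0_def]] that a0 by auto
  have above: "c \<le> ?y k" if "a0 \<le> k" "k < n" for k
    using a0 qsrt_mono[OF that, of q] by linarith
  show ?thesis
  proof (cases "a0 = 0")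
    case True
    have "0 \<le> (\<Sum>k<1. ?y k - c)" "0 \<le> (\<Sum>k\<in>{1..<n}. ?y k - c)"
      using above True assms(1) by (auto intro: sum_nonneg)
    then show ?thesis using that[of 1] assms by simp
  next
    case False
    have "(\<Sum>k<n. tilt G (?y k - c)) = (\<Sum>k<n. if k < a0 then ?y k - c else G * (?y k - c))"
      using below above by (intro sum.cong) (force simp: tilt_def not_less)+
    also have "\<dots> = (\<Sum>k<a0. ?y k - c) + G * (\<Sum>k\<in>{a0..<n}. ?y k - c)"
      using a0 by (simp add: sum_lessThan_if_split sum_distrib_left)
    finally show ?thesis using that[of a0] False a0 assms(3) by simp
  qed
qed

lemma weighted_mean_le_mu_fin:
  fixes p q :: "nat \<Rightarrow> real"
  assumes "2 \<le> n" "1 \<le> G" "0 < m" "\<And>j. j < n \<Longrightarrow> m \<le> p j \<and> p j \<le> G * m"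
    "(\<Sum>j<n. p j) = 1"
  shows "(\<Sum>j<n. p j * q j) \<le> mu_fin q n G"
proof -
  define c where "c = (\<Sum>j<n. p j * q j)"
  have "0 \<le> (\<Sum>j<n. tilt G (q j - c))"
    using assms weighted_centered_sum_eq_0[OF assms(5), of q]
    by (intro sum_tilt_nonneg[of m]) (auto simp: c_def)
  then have "0 \<le> (\<Sum>k<n. tilt G (qsrt q n ! k - c))"
    by (simp add: sum_qsrt[where f = "\<lambda>y. tilt G (y - c)"])
  then obtain a where a: "a \<in> {1..n-1}"
    and num: "0 \<le> (\<Sum>k<a. qsrt q n ! k - c) + G * (\<Sum>k\<in>{a..<n}. qsrt q n ! k - c)"
    using tilt_sum_cutoff assms(1,2) by blast
  have "c * (real a + G * real (n - a)) \<le> (\<Sum>k<a. qsrt q n ! k) + G * (\<Sum>k\<in>{a..<n}. qsrt q n ! k)"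
    using num by (simp add: sum_subtractf algebra_simps)
  then have "c \<le> mu_a q n G a"
    using a assms(2) extreme_denom_pos[of a G n] by (simp add: mu_a_def pos_le_divide_eq)
  also have "\<dots> \<le> mu_fin q n G" using a by (rule mu_a_le_mu_fin)
  finally show ?thesis by (simp add: c_def)
qed

lemma Min_prob_le: "j < n \<Longrightarrow> Min (p ` {..<n}) \<le> (p j :: real)"
  for p :: "nat \<Rightarrow> real"
  by (intro Min_le) auto

lemma prob_le_Max: "j < n \<Longrightarrow> (p j :: real) \<le> Max (p ` {..<n})"
  for p :: "nat \<Rightarrow> real"
  by (intro Max_ge) auto

lemma Min_prob_le_Max: "1 \<le> n \<Longrightarrow> Min (p ` {..<n}) \<le> Max (p ` {..<n})"
  for p :: "nat \<Rightarrow> real"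
  using Min_prob_le[of 0 n p] prob_le_Max[of 0 n p] by linarith

lemma Min_prob_nonneg:
  fixes p :: "nat \<Rightarrow> real"
  assumes "1 \<le> n" "\<And>j. j < n \<Longrightarrow> 0 \<le> p j"
  shows "0 \<le> Min (p ` {..<n})"
proof -
  have "Min (p ` {..<n}) \<in> p ` {..<n}" using assms(1) by (intro Min_in) (auto simp: lessThan_empty_iff)
  then show ?thesis using assms(2) by auto
qed

lemma Max_prob_ge:
  fixes p :: "nat \<Rightarrow> real"
  assumes "1 \<le> n" "(\<Sum>j<n. p j) = 1"
  shows "1 / real n \<le> Max (p ` {..<n})"
proof -
  have "(\<Sum>j<n. p j) \<le> (\<Sum>j<n. Max (p ` {..<n}))"
    by (intro sum_mono prob_le_Max) simp
  then show ?thesis using assms by (simp add: divide_le_eq mult.commute)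
qed

lemma GammaStar_le_ereal:
  fixes p :: "nat \<Rightarrow> real"
  assumes "1 \<le> n" "\<And>j. j < n \<Longrightarrow> 0 \<le> p j" "GammaStar p n \<le> ereal G"
  shows "0 < Min (p ` {..<n})" "Max (p ` {..<n}) \<le> G * Min (p ` {..<n})"
proof -
  have ne: "Min (p ` {..<n}) \<noteq> 0" using assms(3) by (auto simp: GammaStar_def)
  then show pos: "0 < Min (p ` {..<n})" using Min_prob_nonneg[of n p] assms(1,2) by fastforce
  have "Max (p ` {..<n}) / Min (p ` {..<n}) \<le> G" using assms(3) ne by (simp add: GammaStar_def)
  then show "Max (p ` {..<n}) \<le> G * Min (p ` {..<n})" using pos by (simp add: divide_le_eq)
qed

lemma mu_true_le_mu_fin:
  fixes p q :: "nat \<Rightarrow> real"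
  assumes "2 \<le> n" "\<And>j. j < n \<Longrightarrow> 0 \<le> p j" "(\<Sum>j<n. p j) = 1" "GammaStar p n \<le> ereal G"
  shows "mu_true p q n \<le> mu_fin q n G"
proof -
  let ?m = "Min (p ` {..<n})"
  have m_pos: "0 < ?m" and M_le: "Max (p ` {..<n}) \<le> G * ?m"
    using GammaStar_le_ereal[of n p G] assms by auto
  have "1 * ?m \<le> G * ?m"
    using Min_prob_le_Max[of n p] M_le assms(1) by linarith
  then have "1 \<le> G" using m_pos by (rule mult_right_le_imp_le)
  moreover have "?m \<le> p j \<and> p j \<le> G * ?m" if "j < n" for j
    using Min_prob_le[OF that, of p] prob_le_Max[OF that, of p] M_le by linarith
  ultimately show ?thesis
    unfolding mu_true_def using assms m_pos
    by (intro weighted_mean_le_mu_fin[where m = ?m]) auto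
qed

lemma mu_true_le_qsrt_last:
  fixes p q :: "nat \<Rightarrow> real"
  assumes "\<And>j. j < n \<Longrightarrow> 0 \<le> p j" "(\<Sum>j<n. p j) = 1"
  shows "mu_true p q n \<le> qsrt q n ! (n - 1)"
  unfolding mu_true_def using assms le_qsrt_last by (rule weighted_mean_le)

lemma qsrt_first_le_mu_true:
  fixes p q :: "nat \<Rightarrow> real"
  assumes "\<And>j. j < n \<Longrightarrow> 0 \<le> p j" "(\<Sum>j<n. p j) = 1"
  shows "qsrt q n ! 0 \<le> mu_true p q n"
  unfolding mu_true_def using assms qsrt_first_le by (rule weighted_mean_ge)

lemma abs_sub_mu_true_le_Rng:
  fixes p q :: "nat \<Rightarrow> real"
  assumes "j < n" "\<And>j. j < n \<Longrightarrow> 0 \<le> p j" "(\<Sum>j<n. p j) = 1"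
  shows "\<bar>q j - mu_true p q n\<bar> \<le> Rng q n"
proof -
  have "qsrt q n ! 0 \<le> mu_true p q n" using assms(2,3) by (rule qsrt_first_le_mu_true)
  moreover have "mu_true p q n \<le> qsrt q n ! (n - 1)" using assms(2,3) by (rule mu_true_le_qsrt_last)
  ultimately show ?thesis
    using qsrt_first_le[OF assms(1), of q] le_qsrt_last[OF assms(1), of q] unfolding Rng_def by linarith
qed

lemma v2_true_eq_sq_dev:
  fixes p q :: "nat \<Rightarrow> real"
  assumes "(\<Sum>j<n. p j) = 1"
  shows "v2_true p q n = (\<Sum>j<n. p j * (q j - mu_true p q n)^2)"
  unfolding v2_true_def mu_true_def using weighted_variance_eq[OF assms] by simp

lemma v2_true_nonneg:
  fixes p q :: "nat \<Rightarrow> real"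
  assumes "\<And>j. j < n \<Longrightarrow> 0 \<le> p j" "(\<Sum>j<n. p j) = 1"
  shows "0 \<le> v2_true p q n"
  unfolding v2_true_eq_sq_dev[OF assms(2)] using assms(1) by (auto intro: sum_nonneg)

lemma v2_true_le_Rng_sq:
  fixes p q :: "nat \<Rightarrow> real"
  assumes "\<And>j. j < n \<Longrightarrow> 0 \<le> p j" "(\<Sum>j<n. p j) = 1"
  shows "v2_true p q n \<le> (Rng q n)^2"
  unfolding v2_true_eq_sq_dev[OF assms(2)]
proof (rule weighted_mean_le[OF assms])
  fix j assume "j < n"
  then have "\<bar>q j - mu_true p q n\<bar> \<le> Rng q n" using assms by (rule abs_sub_mu_true_le_Rng)
  moreover have "0 \<le> Rng q n" using \<open>j < n\<close> by (intro Rng_nonneg) simp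
  ultimately show "(q j - mu_true p q n)^2 \<le> (Rng q n)^2"
    by (simp flip: abs_le_square_iff)
qed

lemma v2_true_ge:
  fixes p q :: "nat \<Rightarrow> real"
  assumes "2 \<le> n" "\<And>j. j < n \<Longrightarrow> 0 \<le> p j" "(\<Sum>j<n. p j) = 1"
  shows "Min (p ` {..<n}) * (Rng q n)^2 / 2 \<le> v2_true p q n"
proof -
  obtain a b where ab: "a < n" "qsrt q n ! 0 = q a" "b < n" "qsrt q n ! (n - 1) = q b"
    using qsrt_nth_attained[of 0 n q] qsrt_nth_attained[of "n - 1" n q] assms(1) by auto
  show ?thesis
  proof (cases "a = b")
    case True
    then show ?thesis using ab v2_true_nonneg[OF assms(2,3)] by (simp add: Rng_def)
  next
    case False
    then show ?thesis
      unfolding v2_true_eq_sq_dev[OF assms(3)] Rng_def ab(2,4)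
      using assms ab Min_prob_le Min_prob_nonneg[of n p]
      by (intro weighted_sq_dev_ge[where x = q]) auto
  qed
qed

lemma wterm_le_v2_true:
  fixes p q :: "nat \<Rightarrow> real"
  assumes "2 \<le> n" "\<And>j. j < n \<Longrightarrow> 0 \<le> p j" "(\<Sum>j<n. p j) = 1"
  shows "wterm (Rng q n) n (GammaStar p n) \<le> v2_true p q n"
proof (cases "Min (p ` {..<n}) = 0")
  case True
  then show ?thesis using v2_true_nonneg[OF assms(2,3)] by (simp add: wterm_def GammaStar_def)
next
  case False
  let ?m = "Min (p ` {..<n})" and ?M = "Max (p ` {..<n})"
  define G where "G = ?M / ?m"
  have m_pos: "0 < ?m" using False Min_prob_nonneg[of n p] assms by fastforce
  have "?m \<le> ?M" using Min_prob_le_Max[of n p] assms(1) by simp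
  then have G1: "1 \<le> G" using m_pos by (simp add: G_def)
  have "1 \<le> real n * ?M" using Max_prob_ge[of n p] assms by (simp add: divide_le_eq mult.commute)
  then have "?m / (real n * ?M) \<le> ?m / 1" using m_pos by (intro frac_le) auto
  then have "1 / (real n * G) \<le> ?m" using m_pos by (simp add: G_def)
  then have "(1 / (real n * G)) * (Rng q n)^2 / 2 \<le> ?m * (Rng q n)^2 / 2"
    by (intro divide_right_mono mult_right_mono) auto
  moreover have "2 \<le> real n * G" using assms(1) G1 mult_mono[of 2 "real n" 1 G] by simp
  ultimately have "(Rng q n)^2 / (real n * G)^3 \<le> ?m * (Rng q n)^2 / 2"
    using sq_div_cube_le order_trans by blast
  moreover have "wterm (Rng q n) n (GammaStar p n) = (Rng q n)^2 / (real n * G)^3"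
    using False by (simp add: wterm_def GammaStar_def G_def)
  ultimately show ?thesis using v2_true_ge[OF assms, of q] by linarith
qed

lemma le_kth_smallest:
  fixes f :: "nat \<Rightarrow> 'a::linorder"
  assumes J: "J \<subseteq> {..<I}" "card J = k" "1 \<le> k" "k \<le> I"
    and lower: "\<forall>i\<in>J. \<forall>j\<in>{..<I} - J. f i \<le> f j" and "i \<in> J"
  shows "f i \<le> kth_smallest (map f [0..<I]) k"
proof (rule ccontr)
  let ?xs = "sort (map f [0..<I])"
  assume "\<not> ?thesis"
  then have less: "?xs ! (k - 1) < f i" by (simp add: kth_smallest_def)
  have "{..<k} \<subseteq> {t. t < length ?xs \<and> ?xs ! t < f i}"
  proof
    fix t assume "t \<in> {..<k}"
    then have "?xs ! t \<le> ?xs ! (k - 1)" using J by (intro sorted_nth_mono) auto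
    then show "t \<in> {t. t < length ?xs \<and> ?xs ! t < f i}" using less \<open>t \<in> {..<k}\<close> J by auto
  qed
  then have "k \<le> card {t. t < length ?xs \<and> ?xs ! t < f i}"
    using card_mono[of "{t. t < length ?xs \<and> ?xs ! t < f i}" "{..<k}"] by simp
  also have "\<dots> = length (filter (\<lambda>v. v < f i) ?xs)" by (rule length_filter_conv_card[symmetric])
  also have "\<dots> = length (filter (\<lambda>v. v < f i) (map f [0..<I]))"
    by (metis mset_filter mset_sort size_mset)
  also have "\<dots> = card {t. t < I \<and> f t < f i}"
    by (auto simp: length_filter_conv_card intro!: arg_cong[where f = card])
  also have "\<dots> \<le> card (J - {i})"
  proof (intro card_mono subsetI)
    show "finite (J - {i})" using J(1) finite_subset by blast
    fix t assume t: "t \<in> {t. t < I \<and> f t < f i}"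
    have "t \<in> J"
    proof (rule ccontr)
      assume "t \<notin> J"
      then have "f i \<le> f t" using lower \<open>i \<in> J\<close> t by auto
      then show False using t by auto
    qed
    then show "t \<in> J - {i}" using t by auto
  qed
  also have "\<dots> = k - 1" using J \<open>i \<in> J\<close> finite_subset by (simp add: card_Diff_singleton)
  finally show False using J by simp
qed

subsection \<open>Trading variance for mean\<close>

lemma sqrt_diff_le_div_sqrt:
  fixes S V E W :: real
  assumes "0 \<le> S" "S < V" "V - S \<le> E" "0 < W" "W \<le> V"
  shows "sqrt V - sqrt S \<le> E / sqrt W"
proof -
  have "S = sqrt S * sqrt S" using assms(1) by simp
  also have "\<dots> \<le> sqrt V * sqrt S" using assms(1,2) by (intro mult_right_mono) auto
  finally have "(sqrt V - sqrt S) * sqrt V \<le> V - S" using assms(1,2) by (simp add: algebra_simps)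
  then have "sqrt V - sqrt S \<le> (V - S) / sqrt V" using assms(1,2) by (simp add: le_divide_eq)
  also have "\<dots> \<le> E / sqrt W"
  proof (rule frac_le)
    show "0 \<le> E" "V - S \<le> E" using assms by linarith+
    show "0 < sqrt W" "sqrt W \<le> sqrt V" using assms by simp_all
  qed
  finally show ?thesis .
qed

lemma mult_le_of_less_mean_ratio:
  fixes X Y W c N :: real
  assumes "0 < N" "0 < Y" "c < (X / N) / (Y / N) * W"
  shows "c * Y \<le> X * W"
proof -
  have "c < X / Y * W" using assms by simp
  then have "c * Y < X / Y * W * Y" using assms(2) by (intro mult_strict_right_mono)
  then show ?thesis using assms(2) by simp
qed

text \<open>Raising the variances from \<open>s\<close> to \<open>v\<close> raises \<open>c\<close> times the standard deviation by at most
  \<open>c (V - S)/\<surd>W\<close>, and only the indices in \<open>A\<close> contribute to \<open>V - S\<close>; the ratio condition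
  says that the mean gap \<open>u - mu\<close> on \<open>A\<close> pays for this.\<close>
lemma mean_sd_le_of_variance_ratio:
  fixes mu u v s :: "'i \<Rightarrow> real" and S :: "'i set"
  defines "A \<equiv> {i \<in> S. s i < v i}"
  assumes "finite S"
    and mu_le: "\<And>i. i \<in> S \<Longrightarrow> mu i \<le> u i" and s_nonneg: "\<And>i. i \<in> S \<Longrightarrow> 0 \<le> s i"
    and W: "0 < W" "W \<le> (\<Sum>i\<in>S. v i)"
    and ratio: "A \<noteq> {} \<Longrightarrow>
      c < ((\<Sum>i\<in>A. u i - mu i) / card A) / ((\<Sum>i\<in>A. v i - s i) / card A) * sqrt W"
    and "0 \<le> c"
  shows "(\<Sum>i\<in>S. mu i) + c * sqrt (\<Sum>i\<in>S. v i) \<le> (\<Sum>i\<in>S. u i) + c * sqrt (\<Sum>i\<in>S. s i)"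
proof -
  define gain where "gain = (\<Sum>i\<in>A. u i - mu i)"
  define excess where "excess = (\<Sum>i\<in>A. v i - s i)"
  have A_sub: "A \<subseteq> S" and "finite A" using \<open>finite S\<close> by (auto simp: A_def intro: finite_subset)
  have "gain \<le> (\<Sum>i\<in>S. u i - mu i)"
    unfolding gain_def using A_sub mu_le \<open>finite S\<close> by (intro sum_mono2) auto
  then have mean_gap: "gain \<le> (\<Sum>i\<in>S. u i) - (\<Sum>i\<in>S. mu i)" by (simp add: sum_subtractf)
  have "(\<Sum>i\<in>S - A. v i - s i) \<le> 0" by (intro sum_nonpos) (auto simp: A_def)
  then have "(\<Sum>i\<in>S. v i - s i) \<le> excess"
    unfolding excess_def using sum.subset_diff[OF A_sub \<open>finite S\<close>, of "\<lambda>i. v i - s i"] by simp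
  then have var_gap: "(\<Sum>i\<in>S. v i) - (\<Sum>i\<in>S. s i) \<le> excess" by (simp add: sum_subtractf)
  have "c * (sqrt (\<Sum>i\<in>S. v i) - sqrt (\<Sum>i\<in>S. s i)) \<le> gain"
  proof (cases "(\<Sum>i\<in>S. v i) \<le> (\<Sum>i\<in>S. s i)")
    case True
    then have "c * (sqrt (\<Sum>i\<in>S. v i) - sqrt (\<Sum>i\<in>S. s i)) \<le> 0"
      using \<open>0 \<le> c\<close> by (simp add: mult_nonneg_nonpos)
    moreover have "0 \<le> gain" unfolding gain_def using A_sub mu_le by (intro sum_nonneg) auto
    ultimately show ?thesis by linarith
  next
    case False
    then have "0 < excess" using var_gap by linarith
    then have "A \<noteq> {}" by (auto simp: excess_def)
    then have bound: "c * excess \<le> gain * sqrt W"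
      using mult_le_of_less_mean_ratio \<open>0 < excess\<close> ratio \<open>finite A\<close>
      by (simp add: gain_def excess_def card_gt_0_iff)
    have sd_gap: "sqrt (\<Sum>i\<in>S. v i) - sqrt (\<Sum>i\<in>S. s i) \<le> excess / sqrt W"
      using False var_gap W s_nonneg by (intro sqrt_diff_le_div_sqrt sum_nonneg) auto
    have "c * (sqrt (\<Sum>i\<in>S. v i) - sqrt (\<Sum>i\<in>S. s i)) \<le> c * excess / sqrt W"
      using mult_left_mono[OF sd_gap \<open>0 \<le> c\<close>] by simp
    also have "\<dots> \<le> gain" using bound W by (simp add: pos_divide_le_eq)
    finally show ?thesis .
  qed
  then show ?thesis using mean_gap by (simp add: right_diff_distrib)
qed

lemma sum_pairs_diff:
  fixes f g :: "'i \<Rightarrow> real"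
  assumes "finite P" "finite Q"
  shows "(\<Sum>(i, j)\<in>P \<times> Q. f j - g i) = real (card P) * (\<Sum>j\<in>Q. f j) - real (card Q) * (\<Sum>i\<in>P. g i)"
  by (simp add: sum.cartesian_product[symmetric] sum_subtractf sum_distrib_left)

text \<open>Comparison of the swapped parts \<open>P\<close> and \<open>Q\<close> of two index sets of equal size: the pairs in
  \<open>B\<close> carry all of the variance gain and at most the mean loss.\<close>
lemma pair_sums_bounds:
  fixes d v :: "'i \<Rightarrow> real" and P Q :: "'i set"
  defines "B \<equiv> {(i, j). i \<in> P \<and> j \<in> Q \<and> v i < v j}"
  assumes "finite P" "finite Q" "card P = card Q"
    and rank: "\<And>i j. i \<in> P \<Longrightarrow> j \<in> Q \<Longrightarrow> d i < d j \<or> (d i = d j \<and> v j \<le> v i)"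
  shows "real (card P) * ((\<Sum>j\<in>Q. v j) - (\<Sum>i\<in>P. v i)) \<le> (\<Sum>(i, j)\<in>B. v j - v i)"
    and "(\<Sum>(i, j)\<in>B. d j - d i) \<le> real (card P) * ((\<Sum>j\<in>Q. d j) - (\<Sum>i\<in>P. d i))"
    and "0 \<le> (\<Sum>j\<in>Q. d j) - (\<Sum>i\<in>P. d i)"
    and "0 \<le> (\<Sum>(i, j)\<in>B. d j - d i)"
proof -
  have B_sub: "B \<subseteq> P \<times> Q" by (auto simp: B_def)
  have fin: "finite (P \<times> Q)" using assms(2,3) by simp
  have "(\<Sum>(i, j)\<in>P \<times> Q - B. v j - v i) \<le> 0" by (intro sum_nonpos) (auto simp: B_def)
  then show "real (card P) * ((\<Sum>j\<in>Q. v j) - (\<Sum>i\<in>P. v i)) \<le> (\<Sum>(i, j)\<in>B. v j - v i)"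
    using sum.subset_diff[OF B_sub fin, of "\<lambda>(i, j). v j - v i"]
      sum_pairs_diff[OF assms(2,3), of v v] assms(4)
    by (simp add: right_diff_distrib)
  have d_pair: "0 \<le> d j - d i" if "i \<in> P" "j \<in> Q" for i j using rank[OF that] by auto
  have "0 \<le> (\<Sum>(i, j)\<in>P \<times> Q - B. d j - d i)" using d_pair by (intro sum_nonneg) auto
  then show "(\<Sum>(i, j)\<in>B. d j - d i) \<le> real (card P) * ((\<Sum>j\<in>Q. d j) - (\<Sum>i\<in>P. d i))"
    using sum.subset_diff[OF B_sub fin, of "\<lambda>(i, j). d j - d i"]
      sum_pairs_diff[OF assms(2,3), of d d] assms(4)
    by (simp add: right_diff_distrib)
  show "0 \<le> (\<Sum>(i, j)\<in>B. d j - d i)" using d_pair B_sub by (intro sum_nonneg) auto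
  show "0 \<le> (\<Sum>j\<in>Q. d j) - (\<Sum>i\<in>P. d i)"
  proof (cases "card P = 0")
    case True
    then show ?thesis using assms(2-4) by simp
  next
    case False
    have "0 \<le> (\<Sum>(i, j)\<in>P \<times> Q. d j - d i)" using d_pair by (intro sum_nonneg) auto
    then show ?thesis
      using sum_pairs_diff[OF assms(2,3), of d d] assms(4) False
      by (simp add: right_diff_distrib[symmetric] zero_le_mult_iff)
  qed
qed

lemma variance_gain_le_of_pair_ratio:
  fixes d v :: "'i \<Rightarrow> real" and P Q :: "'i set"
  defines "B \<equiv> {(i, j). i \<in> P \<and> j \<in> Q \<and> v i < v j}"
  assumes "finite P" "finite Q" "card P = card Q"
    and rank: "\<And>i j. i \<in> P \<Longrightarrow> j \<in> Q \<Longrightarrow> d i < d j \<or> (d i = d j \<and> v j \<le> v i)"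
    and ratio: "B \<noteq> {} \<Longrightarrow>
      c < ((\<Sum>(i, j)\<in>B. d j - d i) / card B) / ((\<Sum>(i, j)\<in>B. v j - v i) / card B) * sqrt W"
    and "0 < c" "(\<Sum>i\<in>P. v i) < (\<Sum>j\<in>Q. v j)"
  shows "0 < sqrt W"
    and "c * ((\<Sum>j\<in>Q. v j) - (\<Sum>i\<in>P. v i)) \<le> ((\<Sum>j\<in>Q. d j) - (\<Sum>i\<in>P. d i)) * sqrt W"
proof -
  define m where "m = real (card P)"
  note bounds = pair_sums_bounds[where d = d and v = v, OF assms(2-4) rank, folded B_def m_def]
  have "P \<noteq> {} \<or> Q \<noteq> {}" using assms(8) by auto
  then have "0 < m" using assms(2-4) by (auto simp: m_def card_gt_0_iff)
  then have excess: "0 < (\<Sum>(i, j)\<in>B. v j - v i)"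
    using bounds(1) mult_pos_pos[OF \<open>0 < m\<close>, of "(\<Sum>j\<in>Q. v j) - (\<Sum>i\<in>P. v i)"] assms(8)
    by linarith
  then have "B \<noteq> {}" by auto
  moreover have "finite B" using assms(2,3) finite_subset[of B "P \<times> Q"] by (auto simp: B_def)
  ultimately have cross: "c * (\<Sum>(i, j)\<in>B. v j - v i) \<le> (\<Sum>(i, j)\<in>B. d j - d i) * sqrt W"
    using mult_le_of_less_mean_ratio[OF _ excess ratio] by (simp add: card_gt_0_iff)
  have "0 < c * (\<Sum>(i, j)\<in>B. v j - v i)" using assms(7) excess by simp
  then have "0 < (\<Sum>(i, j)\<in>B. d j - d i) * sqrt W" using cross by linarith
  then show "0 < sqrt W" using bounds(4) by (simp add: zero_less_mult_iff)
  have "m * (c * ((\<Sum>j\<in>Q. v j) - (\<Sum>i\<in>P. v i))) \<le> c * (\<Sum>(i, j)\<in>B. v j - v i)"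
    using mult_left_mono[OF bounds(1), of c] assms(7) by (simp add: mult.left_commute)
  also have "\<dots> \<le> (\<Sum>(i, j)\<in>B. d j - d i) * sqrt W" by (rule cross)
  also have "\<dots> \<le> m * ((\<Sum>j\<in>Q. d j) - (\<Sum>i\<in>P. d i)) * sqrt W"
    using bounds(2) \<open>0 < sqrt W\<close> by (intro mult_right_mono) auto
  finally show "c * ((\<Sum>j\<in>Q. v j) - (\<Sum>i\<in>P. v i)) \<le> ((\<Sum>j\<in>Q. d j) - (\<Sum>i\<in>P. d i)) * sqrt W"
    using \<open>0 < m\<close> by (simp add: mult.assoc)
qed

text \<open>Swapping the index set \<open>J\<close> for the ranked set \<open>K\<close> of the same size does not decrease
  \<open>c * sqrt (\<Sum>v) - \<Sum>d\<close>: by the ranking the mean changes \<open>d\<close> can only improve, and the ratio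
  condition on the pairs \<open>B\<close> pays for any loss of variance.\<close>
lemma sd_minus_sum_le_of_rank_swap:
  fixes d v :: "'i \<Rightarrow> real" and J K :: "'i set"
  defines "B \<equiv> {(i, j). i \<in> K - J \<and> j \<in> J - K \<and> v i < v j}"
  assumes fin: "finite J" "finite K" and "card J = card K"
    and rank: "\<And>i j. i \<in> K - J \<Longrightarrow> j \<in> J - K \<Longrightarrow> d i < d j \<or> (d i = d j \<and> v j \<le> v i)"
    and ratio: "B \<noteq> {} \<Longrightarrow>
      c < ((\<Sum>(i, j)\<in>B. d j - d i) / card B) / ((\<Sum>(i, j)\<in>B. v j - v i) / card B) * sqrt W"
    and W: "W \<le> (\<Sum>i\<in>J. v i)" and v_nonneg: "\<And>i. i \<in> K \<Longrightarrow> 0 \<le> v i" and "0 \<le> c"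
  shows "c * sqrt (\<Sum>i\<in>J. v i) - (\<Sum>i\<in>J. d i) \<le> c * sqrt (\<Sum>i\<in>K. v i) - (\<Sum>i\<in>K. d i)"
proof -
  have fin': "finite (K - J)" "finite (J - K)" using fin by auto
  have card: "card (K - J) = card (J - K)"
    using card_Int_Diff[OF fin(1), of K] card_Int_Diff[OF fin(2), of J] \<open>card J = card K\<close>
    by (simp add: Int_commute)
  have split: "(\<Sum>i\<in>J. f i) - (\<Sum>i\<in>K. f i) = (\<Sum>i\<in>J - K. f i) - (\<Sum>i\<in>K - J. f i)" for f :: "'i \<Rightarrow> real"
    using sum.Int_Diff[OF fin(1), of f K] sum.Int_Diff[OF fin(2), of f J] by (simp add: Int_commute)
  have "c * (sqrt (\<Sum>i\<in>J. v i) - sqrt (\<Sum>i\<in>K. v i)) \<le> (\<Sum>i\<in>J - K. d i) - (\<Sum>i\<in>K - J. d i)"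
  proof (cases "(\<Sum>i\<in>J. v i) \<le> (\<Sum>i\<in>K. v i) \<or> c = 0")
    case True
    then have "c * (sqrt (\<Sum>i\<in>J. v i) - sqrt (\<Sum>i\<in>K. v i)) \<le> 0"
      using \<open>0 \<le> c\<close> by (auto simp: mult_nonneg_nonpos)
    then show ?thesis using pair_sums_bounds(3)[where d = d and v = v, OF fin' card rank] by linarith
  next
    case False
    then have gain: "0 < c" "(\<Sum>i\<in>K - J. v i) < (\<Sum>i\<in>J - K. v i)" using split[of v] \<open>0 \<le> c\<close> by auto
    note swap = variance_gain_le_of_pair_ratio[where d = d and v = v, OF fin' card rank
        ratio[unfolded B_def] gain]
    have "0 \<le> (\<Sum>i\<in>K. v i)" using v_nonneg by (intro sum_nonneg) auto
    then have sd_gap: "sqrt (\<Sum>i\<in>J. v i) - sqrt (\<Sum>i\<in>K. v i)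
        \<le> ((\<Sum>i\<in>J - K. v i) - (\<Sum>i\<in>K - J. v i)) / sqrt W"
      using False split[of v] W swap(1) by (intro sqrt_diff_le_div_sqrt) auto
    have "c * (sqrt (\<Sum>i\<in>J. v i) - sqrt (\<Sum>i\<in>K. v i))
        \<le> c * ((\<Sum>i\<in>J - K. v i) - (\<Sum>i\<in>K - J. v i)) / sqrt W"
      using mult_left_mono[OF sd_gap less_imp_le[OF \<open>0 < c\<close>]] by simp
    also have "\<dots> \<le> (\<Sum>i\<in>J - K. d i) - (\<Sum>i\<in>K - J. d i)"
      using swap by (simp add: pos_divide_le_eq)
    finally show ?thesis .
  qed
  then show ?thesis using split[of d] by (simp add: right_diff_distrib)
qed

lemma muG_ereal [simp]: "muG q n (ereal G) = mu_fin q n G"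
  and muG_infinity [simp]: "muG q n \<infinity> = qsrt q n ! (n - 1)"
  and v2G_ereal [simp]: "v2G q n (ereal G) = v2_fin q n G"
  and v2G_infinity [simp]: "v2G q n \<infinity> = 0"
  by (simp_all add: muG_def v2G_def)

lemma mu_Gk_eq_sum:
  assumes "J \<subseteq> {..<I}"
  shows "mu_Gk I n q G0 J = (\<Sum>i<I. muG (q i) (n i) (if i \<in> J then ereal G0 else \<infinity>))"
proof -
  have "{..<I} \<inter> {i. i \<in> J} = J" "{..<I} \<inter> - {i. i \<in> J} = {..<I} - J" using assms by auto
  then show ?thesis by (simp add: mu_Gk_def if_distrib sum.If_cases)
qed

lemma sigma2_Gk_eq_sum:
  assumes "J \<subseteq> {..<I}"
  shows "sigma2_Gk n q G0 J = (\<Sum>i<I. v2G (q i) (n i) (if i \<in> J then ereal G0 else \<infinity>))"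
proof -
  have "{..<I} \<inter> {i. i \<in> J} = J" using assms by auto
  then show ?thesis by (simp add: sigma2_Gk_def if_distrib sum.If_cases)
qed

lemma mu_Gk_eq_diff:
  assumes "J \<subseteq> {..<I}"
  shows "mu_Gk I n q G0 J = (\<Sum>i<I. muG (q i) (n i) \<infinity>)
    - (\<Sum>i\<in>J. muG (q i) (n i) \<infinity> - muG (q i) (n i) (ereal G0))"
  using assms by (simp add: mu_Gk_def sum.subset_diff[of J "{..<I}"] sum_subtractf)

locale matched_design =
  fixes I :: nat and n :: "nat \<Rightarrow> nat" and p :: "nat \<Rightarrow> nat \<Rightarrow> real"
  assumes set_size_ge_2: "i < I \<Longrightarrow> 2 \<le> n i"
    and prob_nonneg: "i < I \<Longrightarrow> j < n i \<Longrightarrow> 0 \<le> p i j"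
    and prob_sum: "i < I \<Longrightarrow> (\<Sum>j<n i. p i j) = 1"
begin

definition mean_T :: "(nat \<Rightarrow> nat \<Rightarrow> real) \<Rightarrow> real" where
  "mean_T q = (\<Sum>i<I. mu_true (p i) (q i) (n i))"

definition var_T :: "(nat \<Rightarrow> nat \<Rightarrow> real) \<Rightarrow> real" where
  "var_T q = (\<Sum>i<I. v2_true (p i) (q i) (n i))"

lemma Ssum_le_var_T: "Ssum I n q p \<le> var_T q"
  unfolding Ssum_def var_T_def
  using set_size_ge_2 prob_nonneg prob_sum by (intro sum_mono wterm_le_v2_true) auto

lemma var_T_pos: "0 < Ssum I n q p \<Longrightarrow> 0 < var_T q"
  using Ssum_le_var_T[of q] by linarith

lemma mu_true_le_muG:
  assumes "i < I" "GammaStar (p i) (n i) \<le> G"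
  shows "mu_true (p i) (q i) (n i) \<le> muG (q i) (n i) G"
proof (cases G)
  case (real r)
  have "mu_true (p i) (q i) (n i) \<le> mu_fin (q i) (n i) r"
    by (rule mu_true_le_mu_fin) (use assms real set_size_ge_2 prob_nonneg prob_sum in auto)
  then show ?thesis using real by simp
next
  case PInf
  have "mu_true (p i) (q i) (n i) \<le> qsrt (q i) (n i) ! (n i - 1)"
    by (rule mu_true_le_qsrt_last) (use assms prob_nonneg prob_sum in auto)
  then show ?thesis using PInf by simp
next
  case MInf
  then show ?thesis using assms(2) by (simp add: GammaStar_def split: if_splits)
qed

lemma mean_sd_le_bound:
  assumes "J \<subseteq> {..<I}" "1 \<le> G0" "\<And>i. i \<in> J \<Longrightarrow> GammaStar (p i) (n i) \<le> ereal G0"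
    and "0 < Ssum I n q p" "ereal c < A3_quantity I n q p G0 J" "0 \<le> c"
  shows "mean_T q + c * sqrt (var_T q) \<le> mu_Gk I n q G0 J + c * sqrt (sigma2_Gk n q G0 J)"
proof -
  define G where "G = (\<lambda>i. if i \<in> J then ereal G0 else \<infinity>)"
  have "(\<Sum>i<I. mu_true (p i) (q i) (n i)) + c * sqrt (\<Sum>i<I. v2_true (p i) (q i) (n i))
      \<le> (\<Sum>i<I. muG (q i) (n i) (G i)) + c * sqrt (\<Sum>i<I. v2G (q i) (n i) (G i))"
  proof (rule mean_sd_le_of_variance_ratio[where W = "Ssum I n q p"])
    show "mu_true (p i) (q i) (n i) \<le> muG (q i) (n i) (G i)" if "i \<in> {..<I}" for i
      using that assms(3) by (intro mu_true_le_muG) (auto simp: G_def)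
    show "0 \<le> v2G (q i) (n i) (G i)" if "i \<in> {..<I}" for i
      using that set_size_ge_2 assms(2) by (simp add: G_def v2_fin_nonneg)
    show "Ssum I n q p \<le> (\<Sum>i<I. v2_true (p i) (q i) (n i))"
      using Ssum_le_var_T by (simp add: var_T_def)
    have A_eq: "A_set I n q p G = {i \<in> {..<I}. v2G (q i) (n i) (G i) < v2_true (p i) (q i) (n i)}"
      by (simp add: A_set_def)
    assume "{i \<in> {..<I}. v2G (q i) (n i) (G i) < v2_true (p i) (q i) (n i)} \<noteq> {}"
    then have "A_set I n q p G \<noteq> {}" by (simp add: A_eq)
    then have "A3_quantity I n q p G0 J = ereal (Delta_mu I n q p G / Delta_v2 I n q p G * sqrt (Ssum I n q p))"
      by (simp add: A3_quantity_def G_def Let_def)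
    then have "c < Delta_mu I n q p G / Delta_v2 I n q p G * sqrt (Ssum I n q p)"
      using assms(5) by simp
    then show "c < ((\<Sum>i\<in>{i \<in> {..<I}. v2G (q i) (n i) (G i) < v2_true (p i) (q i) (n i)}.
          muG (q i) (n i) (G i) - mu_true (p i) (q i) (n i)) /
        card {i \<in> {..<I}. v2G (q i) (n i) (G i) < v2_true (p i) (q i) (n i)}) /
      ((\<Sum>i\<in>{i \<in> {..<I}. v2G (q i) (n i) (G i) < v2_true (p i) (q i) (n i)}.
          v2_true (p i) (q i) (n i) - v2G (q i) (n i) (G i)) /
        card {i \<in> {..<I}. v2G (q i) (n i) (G i) < v2_true (p i) (q i) (n i)}) * sqrt (Ssum I n q p)"
      unfolding Delta_mu_def Delta_v2_def Let_def A_eq .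
  qed (use assms in auto)
  then show ?thesis
    using assms(1) by (simp add: mean_T_def var_T_def mu_Gk_eq_sum sigma2_Gk_eq_sum G_def)
qed

lemma bound_le_ranked_bound:
  assumes "J \<subseteq> {..<I}" "card J = k" "is_Irank I n q G0 k K" "1 \<le> G0"
    and "ereal c < A4_quantity n q G0 K J" "0 \<le> c"
  shows "mu_Gk I n q G0 J + c * sqrt (sigma2_Gk n q G0 J)
    \<le> mu_Gk I n q G0 K + c * sqrt (sigma2_Gk n q G0 K)"
proof -
  define d where "d i = muG (q i) (n i) \<infinity> - muG (q i) (n i) (ereal G0)" for i
  define v where "v i = v2G (q i) (n i) (ereal G0)" for i
  have K: "K \<subseteq> {..<I}" "card K = k" using assms(3) by (auto simp: is_Irank_def)
  have "c * sqrt (\<Sum>i\<in>J. v i) - (\<Sum>i\<in>J. d i) \<le> c * sqrt (\<Sum>i\<in>K. v i) - (\<Sum>i\<in>K. d i)"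
  proof (rule sd_minus_sum_le_of_rank_swap[where W = "\<Sum>i\<in>J. (Rng (q i) (n i))^2 / (real (n i) * G0)^3"])
    show "finite J" "finite K" using assms(1) K(1) by (auto intro: finite_subset)
    show "card J = card K" using assms(2) K(2) by simp
    show "d i < d j \<or> d i = d j \<and> v j \<le> v i" if "i \<in> K - J" "j \<in> J - K" for i j
      using assms(1,3) that unfolding is_Irank_def d_def v_def Let_def by blast
    show "(\<Sum>i\<in>J. (Rng (q i) (n i))^2 / (real (n i) * G0)^3) \<le> (\<Sum>i\<in>J. v i)"
      unfolding v_def using assms(1,4) set_size_ge_2 by (intro sum_mono) (auto intro: v2_fin_ge_wterm)
    show "0 \<le> v i" if "i \<in> K" for i
      using that K(1) assms(4) set_size_ge_2 by (auto simp: v_def intro: v2_fin_nonneg)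
    have B_eq: "B_set n q G0 K J = {(i, j). i \<in> K - J \<and> j \<in> J - K \<and> v i < v j}"
      by (simp add: B_set_def v_def)
    assume "{(i, j). i \<in> K - J \<and> j \<in> J - K \<and> v i < v j} \<noteq> {}"
    with assms(5) show "c < ((\<Sum>(i, j)\<in>{(i, j). i \<in> K - J \<and> j \<in> J - K \<and> v i < v j}. d j - d i) /
        card {(i, j). i \<in> K - J \<and> j \<in> J - K \<and> v i < v j}) /
      ((\<Sum>(i, j)\<in>{(i, j). i \<in> K - J \<and> j \<in> J - K \<and> v i < v j}. v j - v i) /
        card {(i, j). i \<in> K - J \<and> j \<in> J - K \<and> v i < v j}) *
      sqrt (\<Sum>i\<in>J. (Rng (q i) (n i))^2 / (real (n i) * G0)^3)"
      unfolding B_eq[symmetric] by (simp add: A4_quantity_def Let_def d_def v_def)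
  qed (use assms in auto)
  then show ?thesis
    using assms(1) K(1) by (simp add: mu_Gk_eq_diff sigma2_Gk_def d_def v_def)
qed

lemma mean_sd_le_ranked_bound:
  assumes "1 \<le> k" "k \<le> I" "1 \<le> G0"
    and "kth_smallest (map (\<lambda>i. GammaStar (p i) (n i)) [0..<I]) k \<le> ereal G0"
    and "is_Istar I n p k J" "is_Irank I n q G0 k K" "0 < Ssum I n q p"
    and "ereal c < A3_quantity I n q p G0 J" "ereal c < A4_quantity n q G0 K J" "0 \<le> c"
  shows "mean_T q + c * sqrt (var_T q) \<le> mu_Gk I n q G0 K + c * sqrt (sigma2_Gk n q G0 K)"
proof -
  have J: "J \<subseteq> {..<I}" "card J = k"
    and lower: "\<forall>i\<in>J. \<forall>j\<in>{..<I} - J. GammaStar (p i) (n i) \<le> GammaStar (p j) (n j)"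
    using assms(5) by (auto simp: is_Istar_def)
  have "GammaStar (p i) (n i) \<le> ereal G0" if "i \<in> J" for i
    using le_kth_smallest[OF J assms(1,2) lower that] assms(4) by (rule order_trans)
  then have "mean_T q + c * sqrt (var_T q) \<le> mu_Gk I n q G0 J + c * sqrt (sigma2_Gk n q G0 J)"
    using J assms by (intro mean_sd_le_bound) auto
  also have "\<dots> \<le> mu_Gk I n q G0 K + c * sqrt (sigma2_Gk n q G0 K)"
    using J assms by (intro bound_le_ranked_bound) auto
  finally show ?thesis .
qed

end


subsection \<open>Characteristic functions\<close>

lemma abs_one_minus_sub_exp_le:
  fixes a :: real
  assumes "0 \<le> a"
  shows "\<bar>1 - a - exp (- a)\<bar> \<le> a^2 / 2"
proof -
  define g where "g y = exp (- y) - 1 + y - y^2 / 2" for y :: real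
  have deriv: "(g has_real_derivative (- exp (- y) + 1 - y)) (at y)" for y
    unfolding g_def by (auto intro!: derivative_eq_intros simp: power2_eq_square)
  have nonpos: "- exp (- y) + 1 - y \<le> 0" for y :: real
    using exp_ge_add_one_self[of "- y"] by simp
  have "g a \<le> g 0"
    by (rule deriv_nonpos_imp_antimono[where g' = "\<lambda>y. - exp (- y) + 1 - y"])
      (use deriv nonpos assms in auto)
  then show ?thesis using exp_ge_add_one_self[of "- a"] by (simp add: g_def abs_if)
qed

lemma abs_prod_one_minus_sub_exp_le:
  fixes a :: "'i \<Rightarrow> real"
  assumes "finite S" "\<And>i. i \<in> S \<Longrightarrow> 0 \<le> a i \<and> a i \<le> b" "b \<le> 1"
  shows "\<bar>(\<Prod>i\<in>S. 1 - a i) - exp (- (\<Sum>i\<in>S. a i))\<bar> \<le> b * (\<Sum>i\<in>S. a i) / 2"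
proof -
  have "exp (- (\<Sum>i\<in>S. a i)) = (\<Prod>i\<in>S. exp (- a i))"
    using exp_sum[OF assms(1), of "\<lambda>i. - a i"] by (simp add: sum_negf)
  then have "\<bar>(\<Prod>i\<in>S. 1 - a i) - exp (- (\<Sum>i\<in>S. a i))\<bar>
      = norm ((\<Prod>i\<in>S. 1 - a i) - (\<Prod>i\<in>S. exp (- a i)))" by simp
  also have "\<dots> \<le> (\<Sum>i\<in>S. norm (1 - a i - exp (- a i)))"
    by (rule norm_prod_diff) (use assms(2,3) in fastforce)+
  also have "\<dots> \<le> (\<Sum>i\<in>S. b * a i / 2)"
  proof (rule sum_mono)
    fix i assume "i \<in> S"
    then have "\<bar>1 - a i - exp (- a i)\<bar> \<le> a i * a i / 2"
      using abs_one_minus_sub_exp_le[of "a i"] assms(2) by (simp add: power2_eq_square)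
    also have "\<dots> \<le> b * a i / 2" using assms(2)[OF \<open>i \<in> S\<close>] by (simp add: mult_right_mono)
    finally show "norm (1 - a i - exp (- a i)) \<le> b * a i / 2" by simp
  qed
  also have "\<dots> = b * (\<Sum>i\<in>S. a i) / 2" by (simp add: sum_distrib_left sum_divide_distrib)
  finally show ?thesis .
qed

lemma norm_iexp_sub_taylor2_le:
  "cmod (iexp y - (1 + \<i> * complex_of_real y - complex_of_real (y^2 / 2))) \<le> \<bar>y\<bar>^3 / 6"
proof -
  have "(\<Sum>k\<le>2. (\<i> * complex_of_real y)^k / fact k) = 1 + \<i> * complex_of_real y - complex_of_real (y^2 / 2)"
    by (simp add: eval_nat_numeral power2_eq_square complex_eq_iff)
  moreover have "fact (Suc 2) = (6::real)" by (simp add: eval_nat_numeral)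
  ultimately show ?thesis using iexp_approx1[of y 2] by simp
qed

lemma norm_iexp_sub_taylor2_le_sq:
  assumes "\<bar>x\<bar> \<le> R"
  shows "cmod (iexp (s * x) - (1 + \<i> * complex_of_real (s * x) - complex_of_real ((s * x)^2 / 2)))
    \<le> \<bar>s\<bar>^3 * R * x^2 / 6"
proof -
  have "\<bar>x\<bar>^3 = \<bar>x\<bar> * x^2"
    by (simp add: power3_eq_cube power2_eq_square abs_mult_self_eq mult.commute)
  then have "\<bar>s * x\<bar>^3 = \<bar>s\<bar>^3 * (\<bar>x\<bar> * x^2)"
    by (simp add: abs_mult power_mult_distrib)
  also have "\<dots> \<le> \<bar>s\<bar>^3 * (R * x^2)"
    using assms by (intro mult_left_mono mult_right_mono) auto
  finally show ?thesis
    using norm_iexp_sub_taylor2_le[of "s * x"] by (simp add: mult.assoc)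
qed

definition set_char :: "nat \<Rightarrow> (nat \<Rightarrow> real) \<Rightarrow> (nat \<Rightarrow> real) \<Rightarrow> real \<Rightarrow> complex" where
  "set_char n p x s = (\<Sum>j<n. complex_of_real (p j) * iexp (s * x j))"

lemma norm_set_char_le_1:
  fixes p x :: "nat \<Rightarrow> real"
  assumes "\<And>j. j < n \<Longrightarrow> 0 \<le> p j" "(\<Sum>j<n. p j) = 1"
  shows "norm (set_char n p x s) \<le> 1"
proof -
  have "norm (set_char n p x s) \<le> (\<Sum>j<n. norm (complex_of_real (p j) * iexp (s * x j)))"
    unfolding set_char_def by (rule norm_sum)
  also have "\<dots> = (\<Sum>j<n. p j)" using assms(1) by (intro sum.cong) (auto simp: norm_mult)
  also have "\<dots> = 1" by (rule assms(2))
  finally show ?thesis .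
qed

lemma norm_set_char_sub_le:
  fixes p x :: "nat \<Rightarrow> real"
  assumes "\<And>j. j < n \<Longrightarrow> 0 \<le> p j" "(\<Sum>j<n. p j) = 1" "(\<Sum>j<n. p j * x j) = 0"
    and "\<And>j. j < n \<Longrightarrow> \<bar>x j\<bar> \<le> R"
  defines "v \<equiv> \<Sum>j<n. p j * (x j)^2"
  shows "norm (set_char n p x s - complex_of_real (1 - s^2 * v / 2)) \<le> \<bar>s\<bar>^3 * R * v / 6"
proof -
  define P where "P y = 1 + \<i> * complex_of_real y - complex_of_real (y^2 / 2)" for y
  have P_eq: "complex_of_real (p j) * P (s * x j) =
      complex_of_real (p j - s^2 * (p j * (x j)^2) / 2) + \<i> * complex_of_real (s * (p j * x j))" for j
    by (simp add: P_def complex_eq_iff power2_eq_square algebra_simps)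
  have "(\<Sum>j<n. complex_of_real (p j) * P (s * x j))
      = complex_of_real (\<Sum>j<n. p j - s^2 * (p j * (x j)^2) / 2) + \<i> * complex_of_real (s * (\<Sum>j<n. p j * x j))"
    unfolding P_eq by (simp add: sum.distrib flip: sum_distrib_left)
  also have "(\<Sum>j<n. p j - s^2 * (p j * (x j)^2) / 2) = 1 - s^2 * v / 2"
    using assms(2) by (simp add: v_def sum_subtractf sum_distrib_left sum_divide_distrib)
  finally have "(\<Sum>j<n. complex_of_real (p j) * P (s * x j)) = complex_of_real (1 - s^2 * v / 2)"
    using assms(3) by simp
  then have "set_char n p x s - complex_of_real (1 - s^2 * v / 2)
      = (\<Sum>j<n. complex_of_real (p j) * (iexp (s * x j) - P (s * x j)))"
    by (simp add: set_char_def sum_subtractf right_diff_distrib)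
  also have "norm \<dots> \<le> (\<Sum>j<n. p j * (\<bar>s\<bar>^3 * R * (x j)^2 / 6))"
  proof (rule order_trans[OF norm_sum sum_mono])
    fix j assume "j \<in> {..<n}"
    then have "p j * cmod (iexp (s * x j) - P (s * x j)) \<le> p j * (\<bar>s\<bar>^3 * R * (x j)^2 / 6)"
      using assms(1,4) norm_iexp_sub_taylor2_le_sq unfolding P_def by (intro mult_left_mono) auto
    then show "norm (complex_of_real (p j) * (iexp (s * x j) - P (s * x j))) \<le> p j * (\<bar>s\<bar>^3 * R * (x j)^2 / 6)"
      using assms(1) \<open>j \<in> {..<n}\<close> by (simp add: norm_mult)
  qed
  also have "\<dots> = \<bar>s\<bar>^3 * R * v / 6"
    by (simp add: v_def sum_distrib_left sum_divide_distrib mult_ac)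
  finally show ?thesis .
qed

subsection \<open>The randomization distribution of \<open>T\<close>\<close>

context matched_design
begin

text \<open>An assignment \<open>z\<close> records the treated unit \<open>z i\<close> of each set \<open>i < I\<close>.\<close>
definition assignments :: "(nat \<Rightarrow> nat) set" where
  "assignments = PiE {..<I} (\<lambda>i. {..<n i})"

definition assignment_pmf :: "(nat \<Rightarrow> nat) pmf" where
  "assignment_pmf = embed_pmf (\<lambda>z. if z \<in> assignments then (\<Prod>i<I. p i (z i)) else 0)"

lemma finite_assignments [simp]: "finite assignments"
  unfolding assignments_def by (intro finite_PiE) auto

lemma sum_assignments_prod:
  fixes f :: "nat \<Rightarrow> nat \<Rightarrow> 'a::comm_semiring_1"
  shows "(\<Sum>z\<in>assignments. \<Prod>i<I. f i (z i)) = (\<Prod>i<I. \<Sum>j<n i. f i j)"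
  unfolding assignments_def by (rule prod_sum_PiE[symmetric]) auto

lemma assignment_prob_nonneg: "z \<in> assignments \<Longrightarrow> 0 \<le> (\<Prod>i<I. p i (z i))"
  unfolding assignments_def by (intro prod_nonneg) (auto simp: PiE_def Pi_def prob_nonneg)

lemma pmf_assignment_pmf:
  "pmf assignment_pmf z = (if z \<in> assignments then (\<Prod>i<I. p i (z i)) else 0)"
  unfolding assignment_pmf_def
proof (rule pmf_embed_pmf)
  show "0 \<le> (if z \<in> assignments then \<Prod>i<I. p i (z i) else 0)" for z
    using assignment_prob_nonneg by simp
  have "(\<integral>\<^sup>+z. ennreal (if z \<in> assignments then \<Prod>i<I. p i (z i) else 0) \<partial>count_space UNIV)
      = (\<integral>\<^sup>+z. ennreal (\<Prod>i<I. p i (z i)) * indicator assignments z \<partial>count_space UNIV)"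
    by (intro nn_integral_cong) (auto split: split_indicator)
  also have "\<dots> = (\<Sum>z\<in>assignments. ennreal (\<Prod>i<I. p i (z i)))"
    by (simp add: nn_integral_count_space_indicator[symmetric] nn_integral_count_space_finite)
  also have "\<dots> = ennreal (\<Prod>i<I. \<Sum>j<n i. p i j)"
    using assignment_prob_nonneg by (simp add: sum_ennreal sum_assignments_prod)
  also have "\<dots> = 1" by (simp add: prob_sum)
  finally show "(\<integral>\<^sup>+z. ennreal (if z \<in> assignments then \<Prod>i<I. p i (z i) else 0) \<partial>count_space UNIV) = 1" .
qed

lemma integral_assignment_pmf:
  fixes f :: "(nat \<Rightarrow> nat) \<Rightarrow> 'b::{banach, second_countable_topology}"
  shows "(\<integral>z. f z \<partial>assignment_pmf) = (\<Sum>z\<in>assignments. (\<Prod>i<I. p i (z i)) *\<^sub>R f z)"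
proof -
  have "set_pmf assignment_pmf \<subseteq> assignments" by (auto simp: set_pmf_eq pmf_assignment_pmf)
  then have "(\<integral>z. f z \<partial>assignment_pmf) = (\<Sum>z\<in>assignments. pmf assignment_pmf z *\<^sub>R f z)"
    by (intro integral_measure_pmf) auto
  then show ?thesis by (simp add: pmf_assignment_pmf)
qed

lemma prob_T_ge_eq: "prob_T_ge I n q p t = measure_pmf.prob assignment_pmf {z. t \<le> (\<Sum>i<I. q i (z i))}"
proof -
  have "measure_pmf.prob assignment_pmf A = (\<integral>z. indicator A z \<partial>assignment_pmf)" for A
    by simp
  also have "\<dots> A = (\<Sum>z\<in>assignments. (\<Prod>i<I. p i (z i)) *\<^sub>R (indicator A z :: real))" for A
    by (rule integral_assignment_pmf)
  finally have prob_eq: "measure_pmf.prob assignment_pmf A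
      = (\<Sum>z\<in>assignments. (\<Prod>i<I. p i (z i)) *\<^sub>R (indicator A z :: real))" for A .
  show ?thesis
    unfolding prob_T_ge_def assignments_def[symmetric] prob_eq by (intro sum.cong) (auto simp: indicator_def)
qed

definition T_std :: "(nat \<Rightarrow> nat \<Rightarrow> real) \<Rightarrow> (nat \<Rightarrow> nat) \<Rightarrow> real" where
  "T_std q z = ((\<Sum>i<I. q i (z i)) - mean_T q) / sqrt (var_T q)"

definition T_std_distr :: "(nat \<Rightarrow> nat \<Rightarrow> real) \<Rightarrow> real measure" where
  "T_std_distr q = distr (measure_pmf assignment_pmf) borel (T_std q)"

lemma real_distribution_T_std_distr: "real_distribution (T_std_distr q)"
  unfolding T_std_distr_def by (rule prob_space.real_distribution_distr) (simp_all add: prob_space_measure_pmf)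

lemma prob_T_ge_le_one_minus_cdf:
  assumes "0 < var_T q" "mean_T q + c * sqrt (var_T q) \<le> t" "0 < e"
  shows "prob_T_ge I n q p t \<le> 1 - cdf (T_std_distr q) (c - e)"
proof -
  interpret real_distribution "T_std_distr q" by (rule real_distribution_T_std_distr)
  have "{z. t \<le> (\<Sum>i<I. q i (z i))} \<subseteq> T_std q -` {c - e<..}"
  proof
    fix z assume "z \<in> {z. t \<le> (\<Sum>i<I. q i (z i))}"
    then have "c * sqrt (var_T q) \<le> (\<Sum>i<I. q i (z i)) - mean_T q" using assms(2) by simp
    then have "c \<le> T_std q z" using assms(1) by (simp add: T_std_def le_divide_eq)
    then show "z \<in> T_std q -` {c - e<..}" using assms(3) by simp
  qed
  then have "prob_T_ge I n q p t \<le> measure_pmf.prob assignment_pmf (T_std q -` {c - e<..})"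
    unfolding prob_T_ge_eq by (intro measure_pmf.finite_measure_mono) auto
  also have "\<dots> = prob (space (T_std_distr q) - {..c - e})"
    by (simp add: T_std_distr_def measure_distr Compl_eq_Diff_UNIV[symmetric] Compl_atMost)
  also have "\<dots> = 1 - cdf (T_std_distr q) (c - e)"
    by (subst prob_compl) (auto simp: cdf_def T_std_distr_def)
  finally show ?thesis .
qed

lemma char_T_std_distr:
  "char (T_std_distr q) t
    = (\<Prod>i<I. set_char (n i) (p i) (\<lambda>j. q i j - mu_true (p i) (q i) (n i)) (t / sqrt (var_T q)))"
proof -
  define s where "s = t / sqrt (var_T q)"
  define x where "x i j = q i j - mu_true (p i) (q i) (n i)" for i j
  have "t * T_std q z = (\<Sum>i<I. s * x i (z i))" for z
    unfolding T_std_def mean_T_def x_def s_def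
    by (simp add: sum_subtractf sum_distrib_left sum_divide_distrib[symmetric] field_simps)
  then have "iexp (t * T_std q z) = (\<Prod>i<I. iexp (s * x i (z i)))" for z
    by (simp add: sum_distrib_left exp_sum)
  then have "char (T_std_distr q) t
      = (\<Sum>z\<in>assignments. \<Prod>i<I. complex_of_real (p i (z i)) * iexp (s * x i (z i)))"
    by (simp add: char_def T_std_distr_def integral_distr integral_assignment_pmf
        scaleR_conv_of_real prod.distrib)
  also have "\<dots> = (\<Prod>i<I. set_char (n i) (p i) (x i) s)"
    using sum_assignments_prod[of "\<lambda>i j. complex_of_real (p i j) * iexp (s * x i j)"]
    by (simp add: set_char_def)
  finally show ?thesis by (simp add: x_def[abs_def] s_def)
qed

definition max_sq_range :: "(nat \<Rightarrow> nat \<Rightarrow> real) \<Rightarrow> real" where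
  "max_sq_range q = Max ((\<lambda>i. (Rng (q i) (n i))^2) ` {..<I})"

lemma Rng_sq_le_max_sq_range: "i < I \<Longrightarrow> (Rng (q i) (n i))^2 \<le> max_sq_range q"
  unfolding max_sq_range_def by (intro Max_ge) auto

lemma Rng_le_sqrt_max_sq_range: "i < I \<Longrightarrow> Rng (q i) (n i) \<le> sqrt (max_sq_range q)"
  using Rng_sq_le_max_sq_range[of i q] Rng_nonneg[of "n i" "q i"] set_size_ge_2[of i]
  by (simp add: real_le_rsqrt)

lemma v2_true_nonneg_set: "i < I \<Longrightarrow> 0 \<le> v2_true (p i) (q i) (n i)"
  using prob_nonneg prob_sum by (intro v2_true_nonneg) auto

lemma v2_true_le_max_sq_range: "i < I \<Longrightarrow> v2_true (p i) (q i) (n i) \<le> max_sq_range q"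
  using v2_true_le_Rng_sq[where n = "n i" and p = "p i" and q = "q i"] Rng_sq_le_max_sq_range[of i q]
    prob_nonneg prob_sum by fastforce

lemma norm_set_char_centered_sub_le:
  assumes "i < I"
  shows "norm (set_char (n i) (p i) (\<lambda>j. q i j - mu_true (p i) (q i) (n i)) s
      - complex_of_real (1 - s^2 * v2_true (p i) (q i) (n i) / 2))
    \<le> \<bar>s\<bar>^3 * sqrt (max_sq_range q) * v2_true (p i) (q i) (n i) / 6"
proof -
  have "norm (set_char (n i) (p i) (\<lambda>j. q i j - mu_true (p i) (q i) (n i)) s
      - complex_of_real (1 - s^2 * v2_true (p i) (q i) (n i) / 2))
    \<le> \<bar>s\<bar>^3 * Rng (q i) (n i) * v2_true (p i) (q i) (n i) / 6"
    using norm_set_char_sub_le[of "n i" "p i" "\<lambda>j. q i j - mu_true (p i) (q i) (n i)" "Rng (q i) (n i)" s]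
      weighted_centered_sum_eq_0[where n = "n i" and w = "p i" and x = "q i"]
      abs_sub_mu_true_le_Rng[where n = "n i" and p = "p i" and q = "q i"]
      v2_true_eq_sq_dev[where n = "n i" and p = "p i" and q = "q i"] assms prob_nonneg prob_sum
    by (simp add: mu_true_def)
  also have "\<dots> \<le> \<bar>s\<bar>^3 * sqrt (max_sq_range q) * v2_true (p i) (q i) (n i) / 6"
    using assms Rng_le_sqrt_max_sq_range[of i q] v2_true_nonneg_set[of i q]
    by (intro divide_right_mono mult_right_mono mult_left_mono) auto
  finally show ?thesis .
qed

lemma norm_prod_set_char_sub_le:
  assumes "s^2 * max_sq_range q \<le> 2"
  shows "norm ((\<Prod>i<I. set_char (n i) (p i) (\<lambda>j. q i j - mu_true (p i) (q i) (n i)) s)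
      - (\<Prod>i<I. complex_of_real (1 - s^2 * v2_true (p i) (q i) (n i) / 2)))
    \<le> \<bar>s\<bar>^3 * sqrt (max_sq_range q) * var_T q / 6"
proof -
  have "\<bar>1 - s^2 * v2_true (p i) (q i) (n i) / 2\<bar> \<le> 1" if "i < I" for i
  proof -
    have "0 \<le> s^2 * v2_true (p i) (q i) (n i)" "s^2 * v2_true (p i) (q i) (n i) \<le> s^2 * max_sq_range q"
      using that v2_true_nonneg_set v2_true_le_max_sq_range by (auto intro: mult_left_mono)
    then show ?thesis using assms by (simp add: abs_le_iff)
  qed
  then have "norm ((\<Prod>i<I. set_char (n i) (p i) (\<lambda>j. q i j - mu_true (p i) (q i) (n i)) s)
      - (\<Prod>i<I. complex_of_real (1 - s^2 * v2_true (p i) (q i) (n i) / 2)))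
    \<le> (\<Sum>i<I. norm (set_char (n i) (p i) (\<lambda>j. q i j - mu_true (p i) (q i) (n i)) s
      - complex_of_real (1 - s^2 * v2_true (p i) (q i) (n i) / 2)))"
    using prob_nonneg prob_sum by (intro norm_prod_diff norm_set_char_le_1) (auto simp only: norm_of_real)
  also have "\<dots> \<le> (\<Sum>i<I. \<bar>s\<bar>^3 * sqrt (max_sq_range q) * v2_true (p i) (q i) (n i) / 6)"
    by (intro sum_mono norm_set_char_centered_sub_le) simp
  also have "\<dots> = \<bar>s\<bar>^3 * sqrt (max_sq_range q) * var_T q / 6"
    by (simp add: var_T_def sum_distrib_left sum_divide_distrib)
  finally show ?thesis .
qed

definition max_range_ratio :: "(nat \<Rightarrow> nat \<Rightarrow> real) \<Rightarrow> real" where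
  "max_range_ratio q = max_sq_range q / var_T q"

lemma norm_char_T_std_distr_sub_le:
  assumes "0 < var_T q" "t^2 * max_range_ratio q \<le> 2"
  shows "norm (char (T_std_distr q) t - complex_of_real (exp (- (t^2) / 2)))
    \<le> \<bar>t\<bar>^3 * sqrt (max_range_ratio q) / 6 + t^4 * max_range_ratio q / 8"
proof -
  define s where "s = t / sqrt (var_T q)"
  define a where "a i = s^2 * v2_true (p i) (q i) (n i) / 2" for i
  have s_sq: "s^2 = t^2 / var_T q" using assms(1) by (simp add: s_def power_divide)
  have s_sq_max: "s^2 * max_sq_range q = t^2 * max_range_ratio q"
    by (simp add: s_sq max_range_ratio_def)
  have sum_a: "(\<Sum>i<I. a i) = t^2 / 2"
    using assms(1) by (simp add: a_def s_sq var_T_def flip: sum_distrib_left sum_divide_distrib)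
  have a_bounds: "0 \<le> a i \<and> a i \<le> t^2 * max_range_ratio q / 2" if "i \<in> {..<I}" for i
  proof -
    have "0 \<le> v2_true (p i) (q i) (n i)" "v2_true (p i) (q i) (n i) \<le> max_sq_range q"
      using that v2_true_nonneg_set v2_true_le_max_sq_range by auto
    then show ?thesis using mult_left_mono[of _ _ "s^2"] s_sq_max by (fastforce simp: a_def)
  qed
  have "norm (char (T_std_distr q) t - (\<Prod>i<I. complex_of_real (1 - a i)))
      \<le> \<bar>s\<bar>^3 * sqrt (max_sq_range q) * var_T q / 6"
    unfolding char_T_std_distr a_def s_def[symmetric]
    using norm_prod_set_char_sub_le[of s q] assms(2) s_sq_max by simp
  also have "\<dots> = \<bar>t\<bar>^3 * sqrt (max_range_ratio q) / 6"
    using assms(1) by (simp add: s_def max_range_ratio_def real_sqrt_divide power_divide abs_divide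
        power3_eq_cube field_simps)
  finally have char_approx: "norm (char (T_std_distr q) t - (\<Prod>i<I. complex_of_real (1 - a i)))
      \<le> \<bar>t\<bar>^3 * sqrt (max_range_ratio q) / 6" .
  have "\<bar>(\<Prod>i<I. 1 - a i) - exp (- (\<Sum>i<I. a i))\<bar> \<le> t^2 * max_range_ratio q / 2 * (\<Sum>i<I. a i) / 2"
    using a_bounds assms(2) by (intro abs_prod_one_minus_sub_exp_le) auto
  then have exp_approx: "norm ((\<Prod>i<I. complex_of_real (1 - a i)) - complex_of_real (exp (- (t^2) / 2)))
      \<le> t^4 * max_range_ratio q / 8"
    by (simp add: sum_a power4_eq_xxxx power2_eq_square mult_ac flip: of_real_prod of_real_diff)
  show ?thesis
    using norm_triangle_ineq[of "char (T_std_distr q) t - (\<Prod>i<I. complex_of_real (1 - a i))"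
        "(\<Prod>i<I. complex_of_real (1 - a i)) - complex_of_real (exp (- (t^2) / 2))"]
      char_approx exp_approx by simp
qed

lemma max_range_ratio_le_A1_ratio:
  assumes "0 < Ssum I n q p"
  shows "0 \<le> max_range_ratio q" "max_range_ratio q \<le> A1_ratio I n q p"
proof -
  have "I \<noteq> 0" using assms by (cases "I = 0") (auto simp: Ssum_def)
  then have "0 \<le> max_sq_range q" using Rng_sq_le_max_sq_range[of 0 q] zero_le_power2 order_trans by blast
  moreover have "0 < var_T q" using assms by (rule var_T_pos)
  ultimately show "0 \<le> max_range_ratio q" by (simp add: max_range_ratio_def)
  show "max_range_ratio q \<le> A1_ratio I n q p"
    unfolding max_range_ratio_def A1_ratio_def max_sq_range_def[symmetric]
    using Ssum_le_var_T[of q] assms \<open>0 \<le> max_sq_range q\<close> by (intro divide_left_mono) auto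
qed

end

subsection \<open>Asymptotic normality\<close>

lemma isCont_Phi: "isCont Phi x"
proof -
  interpret real_distribution std_normal_distribution by (rule real_dist_normal_dist)
  have "emeasure std_normal_distribution {x} = (\<integral>\<^sup>+y. ennreal (std_normal_density y) * indicator {x} y \<partial>lborel)"
    by (subst emeasure_density) auto
  also have "\<dots> = 0" by (rule nn_integral_null_set) (simp add: null_sets_def)
  finally show ?thesis unfolding Phi_def by (simp add: isCont_cdf measure_def)
qed

text \<open>Condition A1 forces the Lyapunov-type ratio \<open>max_range_ratio\<close> to \<open>0\<close>, so the estimate
  \<open>norm_char_T_std_distr_sub_le\<close> yields convergence of the characteristic functions.\<close>
lemma T_std_distr_weak_conv:
  fixes n :: "nat \<Rightarrow> nat \<Rightarrow> nat" and p q :: "nat \<Rightarrow> nat \<Rightarrow> nat \<Rightarrow> real"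
  assumes design: "\<And>I. matched_design I (n I) (p I)"
    and Ssum_pos: "\<forall>\<^sub>F I in sequentially. 0 < Ssum I (n I) (q I) (p I)"
    and A1: "(\<lambda>I. A1_ratio I (n I) (q I) (p I)) \<longlonglongrightarrow> 0"
  shows "weak_conv_m (\<lambda>I. matched_design.T_std_distr I (n I) (p I) (q I)) std_normal_distribution"
proof (rule levy_continuity)
  fix t :: real
  define r where "r I = matched_design.max_range_ratio I (n I) (p I) (q I)" for I
  have "r \<longlonglongrightarrow> 0"
    using Ssum_pos by (intro tendsto_sandwich[OF _ _ tendsto_const A1])
      (auto elim!: eventually_mono simp: r_def matched_design.max_range_ratio_le_A1_ratio[OF design])
  then have "(\<lambda>I. t^2 * r I) \<longlonglongrightarrow> t^2 * 0" by (intro tendsto_mult tendsto_const)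
  then have "\<forall>\<^sub>F I in sequentially. t^2 * r I < 2" by (intro order_tendstoD(2)) auto
  moreover have "\<forall>\<^sub>F I in sequentially. 0 < matched_design.var_T I (n I) (p I) (q I)"
    using Ssum_pos by eventually_elim (rule matched_design.var_T_pos[OF design])
  ultimately have "\<forall>\<^sub>F I in sequentially.
      norm (char (matched_design.T_std_distr I (n I) (p I) (q I)) t - complex_of_real (exp (- (t^2) / 2)))
      \<le> \<bar>t\<bar>^3 * sqrt (r I) / 6 + t^4 * r I / 8"
    by eventually_elim
      (unfold r_def, rule matched_design.norm_char_T_std_distr_sub_le[OF design], simp_all add: r_def)
  moreover have "(\<lambda>I. \<bar>t\<bar>^3 * sqrt (r I) / 6 + t^4 * r I / 8) \<longlonglongrightarrow> 0"
    using \<open>r \<longlonglongrightarrow> 0\<close> by (auto intro!: tendsto_eq_intros)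
  ultimately have "(\<lambda>I. char (matched_design.T_std_distr I (n I) (p I) (q I)) t
      - complex_of_real (exp (- (t^2) / 2))) \<longlonglongrightarrow> 0"
    by (rule Lim_null_comparison)
  then show "(\<lambda>I. char (matched_design.T_std_distr I (n I) (p I) (q I)) t) \<longlonglongrightarrow> char std_normal_distribution t"
    by (simp add: LIM_zero_iff char_std_normal_distribution)
qed (simp_all add: matched_design.real_distribution_T_std_distr[OF design] real_dist_normal_dist)

lemma limsup_prob_T_ge_le:
  fixes n :: "nat \<Rightarrow> nat \<Rightarrow> nat" and p q :: "nat \<Rightarrow> nat \<Rightarrow> nat \<Rightarrow> real"
  assumes design: "\<And>I. matched_design I (n I) (p I)"
    and weak: "weak_conv_m (\<lambda>I. matched_design.T_std_distr I (n I) (p I) (q I)) std_normal_distribution"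
    and threshold: "\<forall>\<^sub>F I in sequentially. 0 < matched_design.var_T I (n I) (p I) (q I) \<and>
      matched_design.mean_T I (n I) (p I) (q I) + c * sqrt (matched_design.var_T I (n I) (p I) (q I)) \<le> t I"
  shows "limsup (\<lambda>I. ereal (prob_T_ge I (n I) (q I) (p I) (t I))) \<le> ereal (1 - Phi c)"
proof -
  define M where "M I = matched_design.T_std_distr I (n I) (p I) (q I)" for I
  have cdf_conv: "(\<lambda>I. cdf (M I) x) \<longlonglongrightarrow> Phi x" for x
    using weak isCont_Phi[of x] unfolding weak_conv_m_def weak_conv_def Phi_def M_def by auto
  have bound: "limsup (\<lambda>I. ereal (prob_T_ge I (n I) (q I) (p I) (t I))) \<le> ereal (1 - Phi (c - e))"
    if "0 < e" for e
  proof -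
    from threshold have "\<forall>\<^sub>F I in sequentially.
        ereal (prob_T_ge I (n I) (q I) (p I) (t I)) \<le> ereal (1 - cdf (M I) (c - e))"
      by eventually_elim (use that in \<open>auto simp: M_def intro: matched_design.prob_T_ge_le_one_minus_cdf[OF design]\<close>)
    then have "limsup (\<lambda>I. ereal (prob_T_ge I (n I) (q I) (p I) (t I)))
        \<le> limsup (\<lambda>I. ereal (1 - cdf (M I) (c - e)))"
      by (rule Limsup_mono)
    also have "\<dots> = ereal (1 - Phi (c - e))"
      by (intro lim_imp_Limsup) (auto intro!: tendsto_intros cdf_conv)
    finally show ?thesis .
  qed
  have "(\<lambda>m. ereal (1 - Phi (c + - inverse (real (Suc m))))) \<longlonglongrightarrow> ereal (1 - Phi c)"
    by (intro tendsto_intros isCont_tendsto_compose[OF isCont_Phi] LIMSEQ_inverse_real_of_nat_add_minus)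
  then show ?thesis
    by (rule LIMSEQ_le_const) (use bound[of "inverse (real (Suc _))"] in auto)
qed

theorem theorem5:
  fixes n :: "nat \<Rightarrow> nat \<Rightarrow> nat"
    and q :: "nat \<Rightarrow> nat \<Rightarrow> nat \<Rightarrow> real"
    and p :: "nat \<Rightarrow> nat \<Rightarrow> nat \<Rightarrow> real"
    and k :: "nat \<Rightarrow> nat"
    and G0 :: "nat \<Rightarrow> real"
    and Istar :: "nat \<Rightarrow> nat set"
    and Irank :: "nat \<Rightarrow> nat set"
  assumes n_ge2: "\<And>I i. I \<ge> 1 \<Longrightarrow> i < I \<Longrightarrow> n I i \<ge> 2"
    and p_nonneg: "\<And>I i j. I \<ge> 1 \<Longrightarrow> i < I \<Longrightarrow> j < n I i \<Longrightarrow> p I i j \<ge> 0"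
    and p_sum: "\<And>I i. I \<ge> 1 \<Longrightarrow> i < I \<Longrightarrow> (\<Sum>j<n I i. p I i j) = 1"
    and k_range: "\<And>I. I \<ge> 1 \<Longrightarrow> 1 \<le> k I \<and> k I \<le> I"
    and G0_ge1: "\<And>I. I \<ge> 1 \<Longrightarrow> G0 I \<ge> 1"
    and Gk_le: "\<And>I. I \<ge> 1 \<Longrightarrow>
        kth_smallest (map (\<lambda>i. GammaStar (p I i) (n I i)) [0..<I]) (k I) \<le> ereal (G0 I)"
    and Istar: "\<And>I. I \<ge> 1 \<Longrightarrow> is_Istar I (n I) (p I) (k I) (Istar I)"
    and Irank: "\<And>I. I \<ge> 1 \<Longrightarrow> is_Irank I (n I) (q I) (G0 I) (k I) (Irank I)"
    and A1_pos: "eventually (\<lambda>I. Ssum I (n I) (q I) (p I) > 0) sequentially"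
    and A1: "(\<lambda>I. A1_ratio I (n I) (q I) (p I)) \<longlonglongrightarrow> 0"
    and A3: "(\<lambda>I. A3_quantity I (n I) (q I) (p I) (G0 I) (Istar I)) \<longlonglongrightarrow> \<infinity>"
    and A4: "(\<lambda>I. A4_quantity (n I) (q I) (G0 I) (Irank I) (Istar I)) \<longlonglongrightarrow> \<infinity>"
  shows "\<forall>c::real. c \<ge> 0 \<longrightarrow>
     limsup (\<lambda>I. ereal (prob_T_ge I (n I) (q I) (p I)
        (mu_Gk I (n I) (q I) (G0 I) (Irank I) + c * sqrt (sigma2_Gk (n I) (q I) (G0 I) (Irank I)))))
     \<le> ereal (1 - Phi c)"
proof (intro allI impI)
  fix c :: real assume "0 \<le> c"
  have design: "matched_design I (n I) (p I)" for I
    by unfold_locales (use n_ge2 p_nonneg p_sum in auto)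
  have "\<forall>\<^sub>F I in sequentially. 1 \<le> I \<and> 0 < Ssum I (n I) (q I) (p I) \<and>
      ereal c < A3_quantity I (n I) (q I) (p I) (G0 I) (Istar I) \<and>
      ereal c < A4_quantity (n I) (q I) (G0 I) (Irank I) (Istar I)"
    using eventually_ge_at_top A1_pos order_tendstoD(1)[OF A3] order_tendstoD(1)[OF A4]
    by (intro eventually_conj) auto
  then have "\<forall>\<^sub>F I in sequentially. 0 < matched_design.var_T I (n I) (p I) (q I) \<and>
      matched_design.mean_T I (n I) (p I) (q I) + c * sqrt (matched_design.var_T I (n I) (p I) (q I))
        \<le> mu_Gk I (n I) (q I) (G0 I) (Irank I) + c * sqrt (sigma2_Gk (n I) (q I) (G0 I) (Irank I))"
  proof eventually_elim
    case (elim I)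
    then show ?case
      using \<open>0 \<le> c\<close> k_range G0_ge1 Gk_le Istar Irank
      by (auto intro: matched_design.var_T_pos[OF design]
          matched_design.mean_sd_le_ranked_bound[OF design, where k = "k I" and J = "Istar I"])
  qed
  then show "limsup (\<lambda>I. ereal (prob_T_ge I (n I) (q I) (p I)
        (mu_Gk I (n I) (q I) (G0 I) (Irank I) + c * sqrt (sigma2_Gk (n I) (q I) (G0 I) (Irank I)))))
     \<le> ereal (1 - Phi c)"
    by (rule limsup_prob_T_ge_le[OF design T_std_distr_weak_conv[OF design A1_pos A1]])
qed

end
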